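(* Let $\rho>0$, $\theta\ge0$, let $\mathfrak{L}\in C^2[A,\infty)$ with $\lim_{u\to\infty}\mathfrak L(u)=\infty$ and $\mathfrak L'\in NRV_{-1}$, let $\boldsymbol L_f$ be a normalised slowly varying function, and let $\mathfrak K\in NRV_\theta(0+)$ (nondecreasing near $0$ if $\theta=0$). Then there is $\beta>0$ such that $\Phi:(0,\beta)\to\mathbb{R}$ is well defined by \[\int_{\Phi(t)}^\infty \frac{[\mathfrak{L}'(y)]^{1/2}}{y^{\frac{\rho+1}{2}}[\boldsymbol{L}_f(y)]^{1/2}}\,dy=\int_0^t\mathfrak{K}(s)\,ds,\qquad t\in(0,\beta),\] and $\Phi\in C^2(0,\beta)$, $\lim_{t\to0^+}\Phi(t)=\infty$, $\Phi\in NRV_{-2(\theta+1)/\rho}(0+)$. Moreover, for every integer $m\ge1$, \[\lim_{t\to0^+}\frac{\log_m\Phi(t)}{\log_m(1/t)}=\begin{cases}\frac{2(1+\theta)}{\rho},& m=1,\\1,&m\ge2,\end{cases}\] and \[\lim_{t\to0^+}\frac{\Phi(t)\Phi''(t)}{[\Phi'(t)]^2}=1+\frac{\rho}{2(\theta+1)},\qquad \lim_{t\to0^+}\frac{\mathfrak L(\Phi(t))}{\mathfrak L'(\Phi(t))}\cdot\frac{\Phi(t)}{[\Phi'(t)]^2}=0.\]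
   Context: $\log_m$ is the $m$-fold iterate of $\log$. A normalised slowly varying function is a positive $C^1$ function $\widehat L$ on some $[B,\infty)$ with $\lim_{u\to\infty}u\widehat L'(u)/\widehat L(u)=0$. $R\in NRV_\rho$ means $R(u)=u^\rho\widehat L(u)$ for a normalised slowly varying $\widehat L$. $\mathfrak K\in NRV_\theta(0+)$ (resp. $\Phi\in NRV_\gamma(0+)$) means $u\mapsto\mathfrak K(1/u)\in NRV_{-\theta}$ (resp. $u\mapsto\Phi(1/u)\in NRV_{-\gamma}$). *)

theory Defs
  imports "HOL-Analysis.Analysis"
begin

definition logm :: "nat \<Rightarrow> real \<Rightarrow> real" where
  "logm m = (ln ^^ m)"

definition nsv :: "(real \<Rightarrow> real) \<Rightarrow> real \<Rightarrow> bool" where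
  "nsv L B \<longleftrightarrow>
     (\<forall>u\<ge>B. L u > 0) \<and>
     (\<exists>L'. (\<forall>u\<ge>B. (L has_real_derivative L' u) (at u within {B..})) \<and>
           continuous_on {B..} L' \<and>
           ((\<lambda>u. u * L' u / L u) \<longlongrightarrow> 0) at_top)"

definition NRV :: "real \<Rightarrow> (real \<Rightarrow> real) \<Rightarrow> bool" where
  "NRV \<rho> R \<longleftrightarrow> (\<exists>Lh B. B > 0 \<and> nsv Lh B \<and> (\<forall>u\<ge>B. R u = u powr \<rho> * Lh u))"

definition NRV0 :: "real \<Rightarrow> (real \<Rightarrow> real) \<Rightarrow> bool" where
  "NRV0 \<gamma> K \<longleftrightarrow> NRV (-\<gamma>) (\<lambda>u. K (1 / u))"

end

theory Submission
  imports Defs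
begin

(* Put g(y) = sqrt (L1 y) / (y^((\<rho>+1)/2) sqrt (Lf y)), F(x) = \<integral>\<^sub>x\<^sup>\<infinity> g and G(t) = \<integral>\<^sub>0\<^sup>t K,
   so that \<Phi> = F\<^sup>-\<^sup>1 \<circ> G.  The integrand g is normalised regularly varying with index -1-\<rho>/2
   and K has index \<theta> at 0+, so by Karamata's theorem F(x) ~ x g(x)/(\<rho>/2) and G(t) ~ t K(t)/(\<theta>+1).
   Differentiating F(\<Phi>(t)) = G(t) gives \<Phi>' = -K/g(\<Phi>), hence t \<Phi>'(t)/\<Phi>(t) \<rightarrow> -2(\<theta>+1)/\<rho>.
   A positive C^1 function whose logarithmic derivative converges is normalised regularly varying,
   which gives the regular variation of \<Phi> and the iterated-logarithm limits.  Differentiating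
   once more expresses \<Phi> \<Phi>''/\<Phi>'\<^sup>2 through t K'/K and y g'(y)/g(y), and the last limit holds
   because L(y)/(y L1(y)) grows more slowly than every power of y, while \<Phi>(t) grows at most
   like a power of 1/t. *)

section \<open>Regular variation in derivative form\<close>

(* Equivalent to NRV \<rho> f (NRV_imp_smooth_RV, smooth_RV_imp_NRV), but with the derivative f'
   and the threshold B made explicit. *)
definition smooth_RV :: "real \<Rightarrow> (real \<Rightarrow> real) \<Rightarrow> (real \<Rightarrow> real) \<Rightarrow> real \<Rightarrow> bool" where
  "smooth_RV \<rho> f f' B \<longleftrightarrow> B > 0 \<and>
     (\<forall>u\<ge>B. f u > 0 \<and> (f has_real_derivative f' u) (at u) \<and> isCont f' u) \<and>
     ((\<lambda>u. u * f' u / f u) \<longlongrightarrow> \<rho>) at_top"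

definition smooth_RV0 :: "real \<Rightarrow> (real \<Rightarrow> real) \<Rightarrow> (real \<Rightarrow> real) \<Rightarrow> real \<Rightarrow> bool" where
  "smooth_RV0 \<theta> K K' t0 \<longleftrightarrow> t0 > 0 \<and>
     (\<forall>t\<in>{0<..t0}. K t > 0 \<and> (K has_real_derivative K' t) (at t) \<and> isCont K' t) \<and>
     ((\<lambda>t. t * K' t / K t) \<longlongrightarrow> \<theta>) (at_right 0)"

lemma smooth_RVD:
  assumes "smooth_RV \<rho> f f' B" "u \<ge> B"
  shows "f u > 0" "(f has_real_derivative f' u) (at u)" "isCont f' u" "u > 0" "isCont f u"
  using assms DERIV_isCont unfolding smooth_RV_def by auto

lemma smooth_RV_index: "smooth_RV \<rho> f f' B \<Longrightarrow> ((\<lambda>u. u * f' u / f u) \<longlongrightarrow> \<rho>) at_top"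
  unfolding smooth_RV_def by blast

lemma smooth_RV0D:
  assumes "smooth_RV0 \<theta> K K' t0" "t \<in> {0<..t0}"
  shows "K t > 0" "(K has_real_derivative K' t) (at t)" "isCont K' t" "isCont K t"
  using assms DERIV_isCont[of K "K' t" t] unfolding smooth_RV0_def by auto

lemma smooth_RV0_index: "smooth_RV0 \<theta> K K' t0 \<Longrightarrow> ((\<lambda>t. t * K' t / K t) \<longlongrightarrow> \<theta>) (at_right 0)"
  unfolding smooth_RV0_def by blast

lemma smooth_RV_cong:
  assumes f: "smooth_RV \<rho> f f' B" and eq: "\<forall>u\<ge>C. g u = f u" and "B \<le> C"
  shows "smooth_RV \<rho> g f' (C + 1)"
  unfolding smooth_RV_def
proof (intro conjI allI impI)
  show "C + 1 > 0" using f \<open>B \<le> C\<close> unfolding smooth_RV_def by auto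
  fix u assume u: "u \<ge> C + 1"
  show "g u > 0" "isCont f' u" using smooth_RVD[OF f, of u] eq u \<open>B \<le> C\<close> by auto
  show "(g has_real_derivative f' u) (at u)"
  proof (rule has_field_derivative_transform_within_open[where S = "{C<..}"])
    show "(f has_real_derivative f' u) (at u)" using smooth_RVD[OF f, of u] u \<open>B \<le> C\<close> by auto
  qed (use u eq in auto)
next
  have "\<forall>\<^sub>F u in at_top. u * f' u / f u = u * f' u / g u"
    using eventually_ge_at_top[of C] by eventually_elim (use eq in auto)
  then show "((\<lambda>u. u * f' u / g u) \<longlongrightarrow> \<rho>) at_top"
    by (rule Lim_transform_eventually[OF smooth_RV_index[OF f]])
qed

lemma smooth_RV_powr_ident: "smooth_RV c (\<lambda>u. u powr c) (\<lambda>u. c * u powr (c - 1)) 1"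
  unfolding smooth_RV_def
proof (intro conjI allI impI)
  fix u :: real assume u: "u \<ge> 1"
  show "u powr c > 0" using u by simp
  show "((\<lambda>u. u powr c) has_real_derivative c * u powr (c - 1)) (at u)"
    using u by (intro has_real_derivative_powr) auto
  show "isCont (\<lambda>u. c * u powr (c - 1)) u" using u by (intro continuous_intros) auto
next
  have "\<forall>\<^sub>F u in at_top. c = u * (c * u powr (c - 1)) / u powr c"
    using eventually_gt_at_top[of 0] by eventually_elim (simp add: powr_diff)
  then show "((\<lambda>u. u * (c * u powr (c - 1)) / u powr c) \<longlongrightarrow> c) at_top"
    by (rule Lim_transform_eventually[OF tendsto_const])
qed simp

lemma smooth_RV_mult:
  assumes f: "smooth_RV a f f' B" and g: "smooth_RV b g g' C"
  shows "smooth_RV (a + b) (\<lambda>u. f u * g u) (\<lambda>u. f' u * g u + f u * g' u) (max B C)"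
  unfolding smooth_RV_def
proof (intro conjI allI impI)
  show "max B C > 0" using f unfolding smooth_RV_def by auto
  fix u assume "u \<ge> max B C"
  then have "u \<ge> B" "u \<ge> C" by auto
  note fu = smooth_RVD[OF f \<open>u \<ge> B\<close>] and gu = smooth_RVD[OF g \<open>u \<ge> C\<close>]
  show "f u * g u > 0" using fu gu by simp
  show "((\<lambda>u. f u * g u) has_real_derivative f' u * g u + f u * g' u) (at u)"
    using fu gu by (auto intro!: derivative_eq_intros)
  show "isCont (\<lambda>u. f' u * g u + f u * g' u) u"
    using fu gu by (auto intro!: continuous_intros)
next
  have "\<forall>\<^sub>F u in at_top. u * f' u / f u + u * g' u / g u = u * (f' u * g u + f u * g' u) / (f u * g u)"
    using eventually_ge_at_top[of "max B C"]
  proof eventually_elim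
    case (elim u)
    then show ?case using smooth_RVD(1)[OF f, of u] smooth_RVD(1)[OF g, of u]
      by (simp add: field_simps)
  qed
  then show "((\<lambda>u. u * (f' u * g u + f u * g' u) / (f u * g u)) \<longlongrightarrow> a + b) at_top"
    by (rule Lim_transform_eventually[OF tendsto_add[OF smooth_RV_index[OF f] smooth_RV_index[OF g]]])
qed

lemma smooth_RV_powr:
  assumes f: "smooth_RV a f f' B"
  shows "smooth_RV (c * a) (\<lambda>u. f u powr c) (\<lambda>u. c * f u powr (c - 1) * f' u) B"
  unfolding smooth_RV_def
proof (intro conjI allI impI)
  show "B > 0" using f unfolding smooth_RV_def by auto
  fix u assume "u \<ge> B"
  note fu = smooth_RVD[OF f this]
  show "f u powr c > 0" using fu by simp
  show "((\<lambda>u. f u powr c) has_real_derivative c * f u powr (c - 1) * f' u) (at u)"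
    using DERIV_fun_powr[OF fu(2) fu(1)] by simp
  show "isCont (\<lambda>u. c * f u powr (c - 1) * f' u) u"
    using fu by (intro continuous_intros) auto
next
  have "\<forall>\<^sub>F u in at_top. c * (u * f' u / f u) = u * (c * f u powr (c - 1) * f' u) / f u powr c"
    using eventually_ge_at_top[of B]
  proof eventually_elim
    case (elim u)
    then show ?case using smooth_RVD(1)[OF f elim] by (simp add: powr_diff field_simps)
  qed
  then show "((\<lambda>u. u * (c * f u powr (c - 1) * f' u) / f u powr c) \<longlongrightarrow> c * a) at_top"
    by (rule Lim_transform_eventually[OF tendsto_mult_left[OF smooth_RV_index[OF f]]])
qed

lemma has_real_derivative_at_within_Ici:
  assumes "(f has_real_derivative d) (at x within {A..})" and "A < x"
  shows "(f has_real_derivative d) (at x)"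
proof -
  have "x \<in> interior {A..}" using \<open>A < x\<close> by simp
  with assms(1) show ?thesis by (simp only: at_within_interior)
qed

lemma nsv_imp_smooth_RV:
  assumes "nsv L B"
  obtains L' where "smooth_RV 0 L L' (max B 0 + 1)"
proof -
  from assms obtain L' where pos: "\<forall>u\<ge>B. L u > 0"
    and deriv: "\<forall>u\<ge>B. (L has_real_derivative L' u) (at u within {B..})"
    and cont: "continuous_on {B..} L'" and lim: "((\<lambda>u. u * L' u / L u) \<longlongrightarrow> 0) at_top"
    unfolding nsv_def by blast
  have "smooth_RV 0 L L' (max B 0 + 1)"
    unfolding smooth_RV_def
  proof (intro conjI allI impI lim)
    fix u assume u: "u \<ge> max B 0 + 1"
    then have "u \<in> interior {B..}" "u \<ge> B" by auto
    show "(L has_real_derivative L' u) (at u)"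
      using deriv u has_real_derivative_at_within_Ici[of L "L' u" u B] by simp
    show "isCont L' u" by (rule continuous_on_interior[OF cont \<open>u \<in> interior {B..}\<close>])
    show "L u > 0" using pos \<open>u \<ge> B\<close> by blast
  qed linarith
  then show thesis by (rule that)
qed

lemma smooth_RV_zero_imp_nsv:
  assumes L: "smooth_RV 0 L L' B"
  shows "nsv L B"
  unfolding nsv_def
proof (intro conjI allI impI exI[of _ L'])
  show "(L has_real_derivative L' u) (at u within {B..})" if "u \<ge> B" for u
    using smooth_RVD(2)[OF L that] by (rule has_field_derivative_at_within)
  show "continuous_on {B..} L'"
    using smooth_RVD(3)[OF L] by (intro continuous_at_imp_continuous_on) auto
qed (use L smooth_RVD(1)[OF L] in \<open>auto simp: smooth_RV_def\<close>)

lemma NRV_imp_smooth_RV: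
  assumes "NRV \<rho> R"
  obtains R' B where "smooth_RV \<rho> R R' B"
proof -
  from assms obtain Lh B where "B > 0" "nsv Lh B" and R: "\<forall>u\<ge>B. R u = u powr \<rho> * Lh u"
    unfolding NRV_def by blast
  obtain Lh' where "smooth_RV 0 Lh Lh' (max B 0 + 1)"
    using nsv_imp_smooth_RV[OF \<open>nsv Lh B\<close>] by blast
  then have "smooth_RV 0 Lh Lh' (B + 1)" using \<open>B > 0\<close> by simp
  from smooth_RV_mult[OF smooth_RV_powr_ident this]
  have "smooth_RV \<rho> (\<lambda>u. u powr \<rho> * Lh u)
      (\<lambda>u. \<rho> * u powr (\<rho> - 1) * Lh u + u powr \<rho> * Lh' u) (B + 1)"
    using \<open>B > 0\<close> by simp
  then have "smooth_RV \<rho> R (\<lambda>u. \<rho> * u powr (\<rho> - 1) * Lh u + u powr \<rho> * Lh' u) (B + 1 + 1)"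
    by (rule smooth_RV_cong) (use R in auto)
  then show thesis by (rule that)
qed

lemma smooth_RV_imp_NRV:
  assumes f: "smooth_RV \<rho> f f' B"
  shows "NRV \<rho> f"
proof -
  from smooth_RV_mult[OF f smooth_RV_powr_ident[of "-\<rho>"]]
  have "smooth_RV 0 (\<lambda>u. f u * u powr - \<rho>)
      (\<lambda>u. f' u * u powr - \<rho> + f u * (- \<rho> * u powr (- \<rho> - 1))) (max B 1)"
    by simp
  then have "nsv (\<lambda>u. f u * u powr - \<rho>) (max B 1)" by (rule smooth_RV_zero_imp_nsv)
  moreover have "\<forall>u\<ge>max B 1. f u = u powr \<rho> * (f u * u powr - \<rho>)"
    by (simp add: powr_minus)
  moreover have "max B 1 > 0" by simp
  ultimately show ?thesis unfolding NRV_def by blast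
qed

lemma smooth_RV0_of_smooth_RV:
  assumes R: "smooth_RV \<rho> R R' B"
  shows "smooth_RV0 (-\<rho>) (\<lambda>t. R (1/t)) (\<lambda>t. - R' (1/t) / t\<^sup>2) (1/B)"
  unfolding smooth_RV0_def
proof (intro conjI ballI)
  have B: "B > 0" using R unfolding smooth_RV_def by simp
  then show "1/B > 0" by simp
  fix t assume t: "t \<in> {0<..1/B}"
  then have "1/t \<ge> B" using B by (auto simp: field_simps)
  note Rt = smooth_RVD[OF R this]
  show "R (1/t) > 0" by (rule Rt(1))
  have "((\<lambda>t. 1/t) has_real_derivative (- 1 / t\<^sup>2)) (at t)"
    using t by (auto intro!: derivative_eq_intros simp: power2_eq_square)
  from DERIV_chain2[OF Rt(2) this]
  show "((\<lambda>t. R (1/t)) has_real_derivative (- R' (1/t) / t\<^sup>2)) (at t)" by simp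
  show "isCont (\<lambda>t. - R' (1/t) / t\<^sup>2) t"
    using t Rt(3) by (auto intro!: continuous_intros isCont_o2[where f = "\<lambda>t. 1/t" and g = R'])
next
  have "((\<lambda>u. - (u * R' u / R u)) \<longlongrightarrow> -\<rho>) at_top"
    by (intro tendsto_minus smooth_RV_index[OF R])
  then have "((\<lambda>t. - (inverse t * R' (inverse t) / R (inverse t))) \<longlongrightarrow> -\<rho>) (at_right 0)"
    unfolding filterlim_at_right_to_top by simp
  then show "((\<lambda>t. t * (- R' (1/t) / t\<^sup>2) / R (1/t)) \<longlongrightarrow> -\<rho>) (at_right 0)"
    by (rule Lim_transform_eventually)
      (auto simp: eventually_at_right_field power2_eq_square field_simps intro!: exI[of _ 1])
qed

lemma smooth_RV_of_smooth_RV0: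
  assumes K: "smooth_RV0 \<theta> K K' t0"
  shows "smooth_RV (-\<theta>) (\<lambda>u. K (1/u)) (\<lambda>u. - K' (1/u) / u\<^sup>2) (1/t0)"
  unfolding smooth_RV_def
proof (intro conjI allI impI)
  have t0: "t0 > 0" using K unfolding smooth_RV0_def by simp
  then show "1/t0 > 0" by simp
  fix u assume u: "u \<ge> 1/t0"
  with \<open>1/t0 > 0\<close> have "u > 0" by linarith
  with u t0 have "1/u \<in> {0<..t0}" by (simp add: field_simps)
  then have Ku: "K (1/u) > 0" "(K has_real_derivative K' (1/u)) (at (1/u))" "isCont K' (1/u)"
    using K unfolding smooth_RV0_def by auto
  show "K (1/u) > 0" by (rule Ku(1))
  have "((\<lambda>u. 1/u) has_real_derivative (- 1 / u\<^sup>2)) (at u)"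
    using \<open>u > 0\<close> by (auto intro!: derivative_eq_intros simp: power2_eq_square)
  from DERIV_chain2[OF Ku(2) this]
  show "((\<lambda>u. K (1/u)) has_real_derivative (- K' (1/u) / u\<^sup>2)) (at u)" by simp
  show "isCont (\<lambda>u. - K' (1/u) / u\<^sup>2) u"
    using \<open>u > 0\<close> Ku(3) by (auto intro!: continuous_intros isCont_o2[where f = "\<lambda>u. 1/u" and g = K'])
next
  have "((\<lambda>t. - (t * K' t / K t)) \<longlongrightarrow> -\<theta>) (at_right 0)"
    using K unfolding smooth_RV0_def by (intro tendsto_minus) auto
  then have "((\<lambda>u. - (inverse u * K' (inverse u) / K (inverse u))) \<longlongrightarrow> -\<theta>) at_top"
    unfolding filterlim_at_right_to_top by simp
  then show "((\<lambda>u. u * (- K' (1/u) / u\<^sup>2) / K (1/u)) \<longlongrightarrow> -\<theta>) at_top"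
    by (rule Lim_transform_eventually)
      (auto simp: eventually_at_top_linorder power2_eq_square field_simps intro!: exI[of _ 1])
qed

lemma NRV0_imp_smooth_RV0:
  assumes "NRV0 \<theta> K"
  obtains K' t0 where "smooth_RV0 \<theta> K K' t0"
proof -
  from assms obtain R' B where "smooth_RV (-\<theta>) (\<lambda>u. K (1/u)) R' B"
    unfolding NRV0_def by (elim NRV_imp_smooth_RV)
  from smooth_RV0_of_smooth_RV[OF this] show thesis by (intro that) simp
qed

lemma smooth_RV0_imp_NRV0: "smooth_RV0 \<theta> K K' t0 \<Longrightarrow> NRV0 \<theta> K"
  unfolding NRV0_def by (rule smooth_RV_imp_NRV[OF smooth_RV_of_smooth_RV0])

lemma smooth_RV_ln_ratio:
  assumes f: "smooth_RV \<rho> f f' B"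
  shows "((\<lambda>u. ln (f u) / ln u) \<longlongrightarrow> \<rho>) at_top"
proof (rule lhospital_at_top_at_top[where f' = "\<lambda>u. f' u / f u" and g' = "\<lambda>u. 1 / u"])
  show "filterlim (ln :: real \<Rightarrow> real) at_top at_top" by (rule ln_at_top)
  show "\<forall>\<^sub>F u in at_top. 1 / u \<noteq> (0::real)"
    using eventually_gt_at_top[of 0] by eventually_elim auto
  show "\<forall>\<^sub>F u in at_top. (ln has_real_derivative 1 / u) (at u)"
    using eventually_gt_at_top[of 0] by eventually_elim (auto intro!: derivative_eq_intros)
  show "\<forall>\<^sub>F u in at_top. ((\<lambda>u. ln (f u)) has_real_derivative f' u / f u) (at u)"
    using eventually_ge_at_top[of B]
    by eventually_elim (use smooth_RVD[OF f] in \<open>auto intro!: derivative_eq_intros simp: field_simps\<close>)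
  show "((\<lambda>u. f' u / f u / (1 / u)) \<longlongrightarrow> \<rho>) at_top"
    using smooth_RV_index[OF f] by (simp add: field_simps)
qed

lemma ln_ratio_imp_tendsto_0:
  fixes a b :: "'a \<Rightarrow> real"
  assumes lim: "((\<lambda>t. ln (a t) / ln (b t)) \<longlongrightarrow> c) F" and b: "filterlim b at_top F"
    and a: "\<forall>\<^sub>F t in F. a t > 0" and "c < d"
  shows "((\<lambda>t. a t / b t powr d) \<longlongrightarrow> 0) F"
proof -
  have lnb: "filterlim (\<lambda>t. ln (b t)) at_top F" by (rule filterlim_compose[OF ln_at_top b])
  have "((\<lambda>t. ln (a t) / ln (b t) - d) \<longlongrightarrow> c - d) F" by (rule tendsto_diff[OF lim tendsto_const])
  from filterlim_tendsto_neg_mult_at_bot[OF this _ lnb] \<open>c < d\<close>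
  have "filterlim (\<lambda>t. (ln (a t) / ln (b t) - d) * ln (b t)) at_bot F" by simp
  then have "((\<lambda>t. exp ((ln (a t) / ln (b t) - d) * ln (b t))) \<longlongrightarrow> 0) F"
    by (rule filterlim_compose[OF exp_at_bot])
  moreover have "\<forall>\<^sub>F t in F. b t > 1" "\<forall>\<^sub>F t in F. ln (b t) > 0"
    using b lnb by (simp_all add: filterlim_at_top_dense)
  with a have "\<forall>\<^sub>F t in F. exp ((ln (a t) / ln (b t) - d) * ln (b t)) = a t / b t powr d"
  proof eventually_elim
    case (elim t)
    then have "(ln (a t) / ln (b t) - d) * ln (b t) = ln (a t) - d * ln (b t)"
      by (simp add: field_simps)
    with elim show ?case by (simp add: exp_diff powr_def)
  qed
  ultimately show ?thesis by (rule Lim_transform_eventually)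
qed

lemma smooth_RV_o_powr:
  assumes f: "smooth_RV \<rho> f f' B" and "\<rho> < d"
  shows "((\<lambda>u. f u / u powr d) \<longlongrightarrow> 0) at_top"
proof (rule ln_ratio_imp_tendsto_0[OF smooth_RV_ln_ratio[OF f] filterlim_ident _ \<open>\<rho> < d\<close>])
  show "\<forall>\<^sub>F u in at_top. f u > 0"
    using eventually_ge_at_top[of B] by eventually_elim (rule smooth_RVD(1)[OF f])
qed

lemma smooth_RV_le_powr:
  assumes f: "smooth_RV \<rho> f f' B" and "\<rho> < d"
  obtains D where "D \<ge> B" and "\<forall>x\<ge>D. f x \<le> x powr d"
proof -
  have "\<forall>\<^sub>F x in at_top. f x / x powr d < 1"
    using smooth_RV_o_powr[OF f \<open>\<rho> < d\<close>] by (rule order_tendstoD) simp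
  then obtain D where D: "\<forall>x\<ge>D. f x / x powr d < 1" unfolding eventually_at_top_linorder by blast
  have "f x \<le> x powr d" if "x \<ge> max D B" for x
  proof -
    have "x > 0" using smooth_RVD(4)[OF f, of x] that by simp
    moreover have "f x / x powr d < 1" using D that by simp
    ultimately show ?thesis by (simp add: divide_less_eq)
  qed
  then show thesis by (intro that[of "max D B"]) auto
qed

lemma smooth_RV0_ln_ratio:
  assumes "smooth_RV0 \<theta> K K' t0"
  shows "((\<lambda>t. ln (K t) / ln (1/t)) \<longlongrightarrow> -\<theta>) (at_right 0)"
  using smooth_RV_ln_ratio[OF smooth_RV_of_smooth_RV0[OF assms]]
  unfolding filterlim_at_top_to_right by (simp add: inverse_eq_divide)

lemma smooth_RV0_o_powr:
  assumes K: "smooth_RV0 \<theta> K K' t0" and "-\<theta> < d"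
  shows "((\<lambda>t. K t * t powr d) \<longlongrightarrow> 0) (at_right 0)"
proof -
  have "((\<lambda>u. K (1/u) / u powr d) \<longlongrightarrow> 0) at_top"
    by (rule smooth_RV_o_powr[OF smooth_RV_of_smooth_RV0[OF K] \<open>-\<theta> < d\<close>])
  then have "((\<lambda>t. K t / (1/t) powr d) \<longlongrightarrow> 0) (at_right 0)"
    unfolding filterlim_at_top_to_right by (simp add: inverse_eq_divide)
  moreover have "\<forall>\<^sub>F t in at_right 0. K t / (1/t) powr d = K t * t powr d"
    by (auto simp: eventually_at_right_field powr_divide powr_minus_divide intro!: exI[of _ 1])
  ultimately show ?thesis by (rule Lim_transform_eventually)
qed

lemma mono_on_if_pos_derivative:
  fixes f :: "real \<Rightarrow> real"
  assumes "\<forall>x\<in>{a<..<b}. (f has_real_derivative f' x) (at x) \<and> f' x > 0"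
  shows "mono_on {a<..<b} f"
proof (rule mono_onI)
  fix r s assume r: "r \<in> {a<..<b}" and s: "s \<in> {a<..<b}" and "r \<le> s"
  show "f r \<le> f s"
  proof (cases "r = s")
    case False
    with \<open>r \<le> s\<close> have "r < s" by simp
    then have "f r < f s"
    proof (rule DERIV_pos_imp_increasing)
      fix x assume "r \<le> x" "x \<le> s"
      with r s assms show "\<exists>y. (f has_real_derivative y) (at x) \<and> y > 0" by auto
    qed
    then show ?thesis by simp
  qed simp
qed

(* For \<theta> > 0 the positive logarithmic derivative makes K increasing near 0;
   for \<theta> = 0 this is what the monotonicity hypothesis provides. *)
lemma smooth_RV0_bounded:
  assumes K: "smooth_RV0 \<theta> K K' t0" and "\<theta> \<ge> 0"
    and mono: "\<theta> = 0 \<longrightarrow> (\<exists>\<delta>>0. mono_on {0<..<\<delta>} K)"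
  obtains t1 M where "smooth_RV0 \<theta> K K' t1" and "\<forall>t\<in>{0<..t1}. K t \<le> M"
proof -
  have t0: "t0 > 0" using K unfolding smooth_RV0_def by simp
  have "\<exists>\<delta>>0. mono_on {0<..<\<delta>} K"
  proof (cases "\<theta> = 0")
    case False
    with \<open>\<theta> \<ge> 0\<close> have "\<forall>\<^sub>F t in at_right 0. t * K' t / K t > 0"
      using smooth_RV0_index[OF K] by (intro order_tendstoD) auto
    then obtain b where "b > 0" and b: "\<And>t. 0 < t \<Longrightarrow> t < b \<Longrightarrow> t * K' t / K t > 0"
      by (auto simp: eventually_at_right_field)
    have "(K has_real_derivative K' t) (at t) \<and> K' t > 0" if "t \<in> {0<..<min b t0}" for t
      using b[of t] smooth_RV0D(1,2)[OF K, of t] that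
      by (auto simp: zero_less_divide_iff zero_less_mult_iff)
    then have "mono_on {0<..<min b t0} K" by (intro mono_on_if_pos_derivative[of _ _ K K']) blast
    then show ?thesis using \<open>b > 0\<close> t0 by (intro exI[of _ "min b t0"]) auto
  qed (use mono in simp)
  then obtain \<delta> where "\<delta> > 0" "mono_on {0<..<\<delta>} K" by blast
  define t1 where "t1 = min \<delta> t0 / 2"
  have "0 < t1" "t1 \<le> t0" "t1 < \<delta>" using \<open>\<delta> > 0\<close> t0 by (auto simp: t1_def)
  then have "smooth_RV0 \<theta> K K' t1" using K unfolding smooth_RV0_def by auto
  moreover have "\<forall>t\<in>{0<..t1}. K t \<le> K t1"
    using mono_onD[OF \<open>mono_on {0<..<\<delta>} K\<close>] \<open>t1 < \<delta>\<close> \<open>0 < t1\<close> by auto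
  ultimately show thesis by (rule that)
qed

section \<open>Karamata's theorem for the tail and head integrals\<close>

lemma lhopital_zero_at_top:
  fixes f g f' g' :: "real \<Rightarrow> real"
  assumes f0: "(f \<longlongrightarrow> 0) at_top" and g0: "(g \<longlongrightarrow> 0) at_top"
    and gnz: "\<forall>\<^sub>F x in at_top. g x \<noteq> 0" and g'nz: "\<forall>\<^sub>F x in at_top. g' x \<noteq> 0"
    and Df: "\<forall>\<^sub>F x in at_top. (f has_real_derivative f' x) (at x)"
    and Dg: "\<forall>\<^sub>F x in at_top. (g has_real_derivative g' x) (at x)"
    and lim: "((\<lambda>x. f' x / g' x) \<longlongrightarrow> y) at_top"
  shows "((\<lambda>x. f x / g x) \<longlongrightarrow> y) at_top"
  unfolding filterlim_at_top_to_right
proof (rule lhopital_right_0)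
  let ?D = "\<lambda>f' x. f' (inverse x) * - (inverse x ^ Suc (Suc 0))"
  show "((\<lambda>x. f (inverse x)) \<longlongrightarrow> 0) (at_right 0)" "((\<lambda>x. g (inverse x)) \<longlongrightarrow> 0) (at_right 0)"
    using f0 g0 unfolding filterlim_at_top_to_right .
  show "\<forall>\<^sub>F x in at_right 0. g (inverse x) \<noteq> 0"
    using gnz unfolding eventually_at_right_to_top by simp
  show "\<forall>\<^sub>F x in at_right 0. ((\<lambda>x. g (inverse x)) has_real_derivative ?D g' x) (at x)"
    unfolding eventually_at_right_to_top
    using Dg eventually_ge_at_top[where c=1]
    by eventually_elim (rule derivative_eq_intros DERIV_chain'[where f=inverse] | simp)+
  show "\<forall>\<^sub>F x in at_right 0. ((\<lambda>x. f (inverse x)) has_real_derivative ?D f' x) (at x)"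
    unfolding eventually_at_right_to_top
    using Df eventually_ge_at_top[where c=1]
    by eventually_elim (rule derivative_eq_intros DERIV_chain'[where f=inverse] | simp)+
  show "\<forall>\<^sub>F x in at_right 0. ?D g' x \<noteq> 0"
    unfolding eventually_at_right_to_top
    using g'nz eventually_ge_at_top[where c=1] by eventually_elim auto
  have "\<forall>\<^sub>F x in at_top. f' x / g' x = ?D f' (inverse x) / ?D g' (inverse x)"
    using eventually_ge_at_top[where c=1] by eventually_elim simp
  then show "((\<lambda>x. ?D f' x / ?D g' x) \<longlongrightarrow> y) (at_right 0)"
    unfolding filterlim_at_right_to_top by (rule Lim_transform_eventually[OF lim])
qed

lemma tail_integral_has_derivative:
  fixes g :: "real \<Rightarrow> real"
  assumes cont: "continuous_on {D..} g" and int: "\<forall>x\<ge>D. g integrable_on {x..}" and "x > D"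
  shows "((\<lambda>x. integral {x..} g) has_real_derivative - g x) (at x)"
proof -
  have split: "integral {z..} g = integral {z..x+1} g + integral {x+1..} g" if "D \<le> z" "z \<le> x + 1" for z
  proof -
    have "(g has_integral integral {z..x+1} g + integral {x+1..} g) ({z..x+1} \<union> {x+1..})"
      using that int \<open>x > D\<close> continuous_on_subset[OF cont, of "{z..x+1}"]
      by (intro has_integral_Un) (auto intro!: integrable_continuous_interval)
    moreover have "{z..x+1} \<union> {x+1..} = {z..}" using that by auto
    ultimately show ?thesis by (simp add: integral_unique)
  qed
  have "((\<lambda>z. integral {z..x+1} g) has_real_derivative - g x) (at x within {D..x+1})"
    using \<open>x > D\<close> by (intro integral_has_real_derivative' continuous_on_subset[OF cont]) auto
  then have "((\<lambda>z. integral {z..x+1} g) has_real_derivative - g x) (at x)"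
    using at_within_Icc_at[of D x "x+1"] \<open>x > D\<close> by simp
  from DERIV_add[OF this DERIV_const[of "integral {x+1..} g"]]
  have "((\<lambda>z. integral {z..x+1} g + integral {x+1..} g) has_real_derivative - g x) (at x)"
    by simp
  then show ?thesis
  proof (rule has_field_derivative_transform_within_open[where S = "{D<..<x+1}"])
    show "integral {z..x+1} g + integral {x+1..} g = integral {z..} g" if "z \<in> {D<..<x+1}" for z
      using split[of z] that by simp
  qed (use \<open>x > D\<close> in auto)
qed

lemma tail_integral_powr_bound:
  fixes g :: "real \<Rightarrow> real"
  assumes D: "D > 0" and "\<epsilon> > 0" and cont: "continuous_on {D..} g"
    and bound: "\<forall>x\<ge>D. 0 \<le> g x \<and> g x \<le> x powr (-1-\<epsilon>)"
  shows "\<forall>x\<ge>D. g integrable_on {x..} \<and> 0 \<le> integral {x..} g"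
    and "((\<lambda>x. integral {x..} g) \<longlongrightarrow> 0) at_top"
proof -
  have powr_int: "((\<lambda>y. y powr (-1-\<epsilon>)) has_integral x powr -\<epsilon> / \<epsilon>) {x..}" if "x \<ge> D" for x
    using has_integral_powr_to_inf[of "-1-\<epsilon>" x] \<open>\<epsilon> > 0\<close> D that by simp
  have int: "g integrable_on {x..}" if "x \<ge> D" for x
  proof -
    have "g absolutely_integrable_on {x..}"
    proof (rule measurable_bounded_by_integrable_imp_absolutely_integrable)
      show "g \<in> borel_measurable (lebesgue_on {x..})"
        using that by (intro continuous_imp_measurable_on_sets_lebesgue continuous_on_subset[OF cont]) auto
      show "(\<lambda>y. y powr (-1-\<epsilon>)) integrable_on {x..}"
        using powr_int[OF that] by blast
    qed (use bound that in auto)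
    then show ?thesis by (simp add: absolutely_integrable_on_def)
  qed
  have bounds: "0 \<le> integral {x..} g \<and> integral {x..} g \<le> x powr -\<epsilon> / \<epsilon>" if "x \<ge> D" for x
  proof
    show "0 \<le> integral {x..} g" using int bound that by (intro integral_nonneg) auto
    have "integral {x..} g \<le> integral {x..} (\<lambda>y. y powr (-1-\<epsilon>))"
      using int powr_int[OF that] bound that by (intro integral_le) auto
    also have "\<dots> = x powr -\<epsilon> / \<epsilon>" using powr_int[OF that] by (rule integral_unique)
    finally show "integral {x..} g \<le> x powr -\<epsilon> / \<epsilon>" .
  qed
  then show "\<forall>x\<ge>D. g integrable_on {x..} \<and> 0 \<le> integral {x..} g" using int by blast
  show "((\<lambda>x. integral {x..} g) \<longlongrightarrow> 0) at_top"
  proof (rule tendsto_sandwich[OF _ _ tendsto_const])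
    show "((\<lambda>x. x powr -\<epsilon> / \<epsilon>) \<longlongrightarrow> 0) at_top"
      using \<open>\<epsilon> > 0\<close> by (intro tendsto_divide_zero tendsto_neg_powr filterlim_ident) auto
    show "\<forall>\<^sub>F x in at_top. 0 \<le> integral {x..} g"
      using eventually_ge_at_top[of D] by eventually_elim (rule bounds[THEN conjunct1])
    show "\<forall>\<^sub>F x in at_top. integral {x..} g \<le> x powr -\<epsilon> / \<epsilon>"
      using eventually_ge_at_top[of D] by eventually_elim (rule bounds[THEN conjunct2])
  qed
qed

lemma smooth_RV_tail_ratio:
  assumes g: "smooth_RV (-1-\<sigma>) g g' B" and "\<sigma> > 0" and F_lim: "(F \<longlongrightarrow> 0) at_top"
    and F_deriv: "\<forall>\<^sub>F x in at_top. (F has_real_derivative - g x) (at x)"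
  shows "((\<lambda>x. F x / (x * g x)) \<longlongrightarrow> 1/\<sigma>) at_top"
proof (rule lhopital_zero_at_top[OF F_lim _ _ _ F_deriv])
  have "\<forall>\<^sub>F x in at_top. g x / x powr -1 = x * g x"
    using eventually_gt_at_top[of 0] by eventually_elim (simp add: powr_minus divide_inverse mult.commute)
  with smooth_RV_o_powr[OF g, of "-1"] \<open>\<sigma> > 0\<close> show "((\<lambda>x. x * g x) \<longlongrightarrow> 0) at_top"
    by (auto elim: Lim_transform_eventually)
  have ev: "\<forall>\<^sub>F x in at_top. x \<ge> B" by (rule eventually_ge_at_top)
  then show "\<forall>\<^sub>F x in at_top. x * g x \<noteq> 0"
    by eventually_elim (use smooth_RVD(1,4)[OF g] in force)
  show "\<forall>\<^sub>F x in at_top. ((\<lambda>x. x * g x) has_real_derivative g x + x * g' x) (at x)"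
    using ev by eventually_elim (use smooth_RVD(2)[OF g] in \<open>auto intro!: derivative_eq_intros\<close>)
  have "\<forall>\<^sub>F x in at_top. x * g' x / g x < -1"
    using smooth_RV_index[OF g] \<open>\<sigma> > 0\<close> by (intro order_tendstoD) auto
  with ev show "\<forall>\<^sub>F x in at_top. g x + x * g' x \<noteq> 0"
    by eventually_elim (use smooth_RVD(1)[OF g] in \<open>force simp: divide_less_eq\<close>)
  have "((\<lambda>x. - 1 / (1 + x * g' x / g x)) \<longlongrightarrow> - 1 / (1 + (-1-\<sigma>))) at_top"
    using \<open>\<sigma> > 0\<close> by (intro tendsto_divide tendsto_const tendsto_add smooth_RV_index[OF g]) auto
  moreover have "\<forall>\<^sub>F x in at_top. - 1 / (1 + x * g' x / g x) = - g x / (g x + x * g' x)"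
    using ev by eventually_elim (use smooth_RVD(1)[OF g] in \<open>force simp: field_simps\<close>)
  ultimately show "((\<lambda>x. - g x / (g x + x * g' x)) \<longlongrightarrow> 1/\<sigma>) at_top"
    by (auto elim: Lim_transform_eventually)
qed

lemma smooth_RV_tail_integral:
  assumes g: "smooth_RV (-1-\<sigma>) g g' B" and "\<sigma> > 0"
  obtains D where "D \<ge> B"
    and "\<forall>x\<ge>D. g integrable_on {x..}"
    and "\<forall>x\<ge>D. ((\<lambda>x. integral {x..} g) has_real_derivative - g x) (at x)"
    and "\<forall>x\<ge>D. integral {x..} g > 0"
    and "((\<lambda>x. integral {x..} g) \<longlongrightarrow> 0) at_top"
    and "((\<lambda>x. integral {x..} g / (x * g x)) \<longlongrightarrow> 1/\<sigma>) at_top"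
proof -
  define F where "F x = integral {x..} g" for x
  obtain D where "D \<ge> B" and le: "\<forall>x\<ge>D. g x \<le> x powr (-1-\<sigma>/2)"
    using smooth_RV_le_powr[OF g, of "-1-\<sigma>/2"] \<open>\<sigma> > 0\<close> by auto
  have "D > 0" using smooth_RVD(4)[OF g \<open>D \<ge> B\<close>] .
  have "\<forall>x\<ge>D. 0 \<le> g x \<and> g x \<le> x powr (-1-\<sigma>/2)"
    using le smooth_RVD(1)[OF g] \<open>D \<ge> B\<close> by (auto intro: less_imp_le)
  moreover have cont: "continuous_on {D..} g"
    using smooth_RVD(5)[OF g] \<open>D \<ge> B\<close> by (intro continuous_at_imp_continuous_on) auto
  ultimately have int: "\<forall>x\<ge>D. g integrable_on {x..} \<and> 0 \<le> F x" and F_lim: "(F \<longlongrightarrow> 0) at_top"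
    using tail_integral_powr_bound[OF \<open>D > 0\<close> half_gt_zero[OF \<open>\<sigma> > 0\<close>]] unfolding F_def by auto
  have F_deriv: "(F has_real_derivative - g x) (at x)" if "x > D" for x
    unfolding F_def[abs_def] using cont int that by (intro tail_integral_has_derivative) auto
  have F_pos: "F x > 0" if "x \<ge> D + 1" for x
  proof -
    have "F (x + 1) < F x"
      using F_deriv smooth_RVD(1)[OF g] that \<open>D \<ge> B\<close>
      by (intro DERIV_neg_imp_decreasing[of x "x + 1"]) force+
    moreover have "F (x + 1) \<ge> 0" using int that by simp
    ultimately show ?thesis by linarith
  qed
  have "\<forall>\<^sub>F x in at_top. (F has_real_derivative - g x) (at x)"
    using eventually_gt_at_top[of D] by eventually_elim (rule F_deriv)
  from smooth_RV_tail_ratio[OF g \<open>\<sigma> > 0\<close> F_lim this]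
  have "((\<lambda>x. F x / (x * g x)) \<longlongrightarrow> 1/\<sigma>) at_top" .
  with F_deriv F_pos F_lim int \<open>D \<ge> B\<close> show thesis
    by (intro that[of "D + 1"]) (auto simp: F_def[abs_def])
qed

lemma integrable_on_0_if_bounded:
  fixes K :: "real \<Rightarrow> real"
  assumes K: "\<forall>s\<in>{0<..t}. norm (K s) \<le> M \<and> isCont K s"
  shows "K integrable_on {0..t}"
proof -
  have "K absolutely_integrable_on {0<..t}"
  proof (rule measurable_bounded_by_integrable_imp_absolutely_integrable)
    show "K \<in> borel_measurable (lebesgue_on {0<..t})"
      using K by (intro continuous_imp_measurable_on_sets_lebesgue continuous_at_imp_continuous_on) auto
    have "bounded {0<..t}" by (rule bounded_subset[of "cbox 0 t"]) auto
    then show "(\<lambda>y. M) integrable_on {0<..t}"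
      by (intro integrable_on_const bounded_set_imp_lmeasurable) auto
  qed (use K in auto)
  then have "K integrable_on {0<..t}" by (simp add: absolutely_integrable_on_def)
  moreover have "negligible (({0<..t} - {0..t}) \<union> ({0..t} - {0<..t}))"
    by (rule negligible_subset[of "{0}"]) auto
  ultimately show "K integrable_on {0..t}" using integrable_spike_set_eq by blast
qed

lemma head_integral_has_derivative:
  fixes K :: "real \<Rightarrow> real"
  assumes cont: "\<forall>s\<in>{0<..<t0}. isCont K s" and int: "\<forall>s\<in>{0<..<t0}. K integrable_on {0..s}"
    and t: "t \<in> {0<..<t0}"
  shows "((\<lambda>t. integral {0..t} K) has_real_derivative K t) (at t)"
proof -
  define a b where "a = t / 2" and "b = (t + t0) / 2"
  have ab: "0 < a" "a < t" "t < b" "b < t0" using t by (auto simp: a_def b_def)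
  have "((\<lambda>z. integral {a..z} K) has_real_derivative K t) (at t within {a..b})"
    using cont ab by (intro integral_has_real_derivative continuous_at_imp_continuous_on) auto
  then have "((\<lambda>z. integral {a..z} K) has_real_derivative K t) (at t)"
    using at_within_Icc_at[of a t b] ab by simp
  from DERIV_add[OF DERIV_const[of "integral {0..a} K"] this]
  have "((\<lambda>z. integral {0..a} K + integral {a..z} K) has_real_derivative K t) (at t)" by simp
  then show ?thesis
  proof (rule has_field_derivative_transform_within_open[where S = "{a<..<b}"])
    show "integral {0..a} K + integral {a..z} K = integral {0..z} K" if "z \<in> {a<..<b}" for z
      using that ab int by (intro Henstock_Kurzweil_Integration.integral_combine) auto
  qed (use ab in auto)
qed

lemma head_integral_bounds:
  fixes K :: "real \<Rightarrow> real"
  assumes "t0 > 0" and K: "\<forall>t\<in>{0<..<t0}. 0 < K t \<and> K t \<le> M \<and> isCont K t"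
  shows "\<forall>t\<in>{0<..<t0}. K integrable_on {0..t} \<and> 0 < integral {0..t} K \<and> integral {0..t} K \<le> M * t"
    and "((\<lambda>t. integral {0..t} K) \<longlongrightarrow> 0) (at_right 0)"
proof -
  define G where "G t = integral {0..t} K" for t
  have int: "\<forall>t\<in>{0<..<t0}. K integrable_on {0..t}"
    using K by (auto intro!: integrable_on_0_if_bounded[of _ _ M] simp: abs_of_pos)
  have G_nonneg_le: "0 \<le> G t \<and> G t \<le> M * t" if t: "t \<in> {0<..<t0}" for t
  proof -
    define K0 where "K0 s = (if s = 0 then 0 else K s)" for s
    have "G t = integral {0..t} K0"
      unfolding G_def by (rule integral_spike[of "{0}"]) (auto simp: K0_def)
    moreover have "K0 integrable_on {0..t}"
      by (rule integrable_spike[OF int[rule_format, OF t], of "{0}"]) (auto simp: K0_def)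
    moreover have "\<forall>s\<in>{0..t}. 0 \<le> K0 s \<and> K0 s \<le> M" using K t by (auto simp: K0_def less_imp_le)
    ultimately show ?thesis
      using integral_nonneg[of K0 "{0..t}"] integral_le[of K0 "{0..t}" "\<lambda>_. M"] t
      by (auto simp: mult.commute)
  qed
  have G_pos: "0 < G t" if t: "t \<in> {0<..<t0}" for t
  proof -
    have "G (t/2) < G t"
    proof (rule DERIV_pos_imp_increasing[of "t/2" t])
      fix z assume "t/2 \<le> z" "z \<le> t"
      then have "z \<in> {0<..<t0}" using t by auto
      then show "\<exists>y. (G has_real_derivative y) (at z) \<and> 0 < y"
        using head_integral_has_derivative[of t0 K z] K int unfolding G_def[abs_def] by auto
    qed (use t in simp)
    then show ?thesis using G_nonneg_le[of "t/2"] t by auto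
  qed
  show "\<forall>t\<in>{0<..<t0}. K integrable_on {0..t} \<and> 0 < integral {0..t} K \<and> integral {0..t} K \<le> M * t"
    using int G_pos G_nonneg_le unfolding G_def by blast
  show "((\<lambda>t. integral {0..t} K) \<longlongrightarrow> 0) (at_right 0)"
  proof (rule tendsto_sandwich[OF _ _ tendsto_const tendsto_mult_right_zero[OF tendsto_ident_at]])
    have ev: "\<forall>\<^sub>F t in at_right 0. t \<in> {0<..<t0}"
      using \<open>t0 > 0\<close> by (auto simp: eventually_at_right_field)
    show "\<forall>\<^sub>F t in at_right 0. 0 \<le> integral {0..t} K"
      using ev by eventually_elim (use G_nonneg_le in \<open>force simp: G_def\<close>)
    show "\<forall>\<^sub>F t in at_right 0. integral {0..t} K \<le> M * t"
      using ev by eventually_elim (use G_nonneg_le in \<open>force simp: G_def\<close>)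
  qed
qed

lemma smooth_RV0_head_ratio:
  assumes K: "smooth_RV0 \<theta> K K' t0" and "\<theta> > -1" and G_lim: "(G \<longlongrightarrow> 0) (at_right 0)"
    and G_deriv: "\<forall>\<^sub>F t in at_right 0. (G has_real_derivative K t) (at t)"
    and tK_lim: "((\<lambda>t. t * K t) \<longlongrightarrow> 0) (at_right 0)"
  shows "((\<lambda>t. G t / (t * K t)) \<longlongrightarrow> 1/(\<theta>+1)) (at_right 0)"
proof (rule lhopital_right_0[OF G_lim tK_lim _ _ G_deriv])
  have ev: "\<forall>\<^sub>F t in at_right 0. t \<in> {0<..t0}"
    using K unfolding smooth_RV0_def by (auto simp: eventually_at_right_field)
  then show "\<forall>\<^sub>F t in at_right 0. t * K t \<noteq> 0"
    by eventually_elim (use smooth_RV0D(1)[OF K] in force)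
  show "\<forall>\<^sub>F t in at_right 0. ((\<lambda>t. t * K t) has_real_derivative K t + t * K' t) (at t)"
    using ev by eventually_elim (use smooth_RV0D(2)[OF K] in \<open>auto intro!: derivative_eq_intros\<close>)
  have "\<forall>\<^sub>F t in at_right 0. t * K' t / K t > -1"
    using smooth_RV0_index[OF K] \<open>\<theta> > -1\<close> by (rule order_tendstoD)
  with ev show "\<forall>\<^sub>F t in at_right 0. K t + t * K' t \<noteq> 0"
    by eventually_elim (use smooth_RV0D(1)[OF K] in \<open>force simp: less_divide_eq\<close>)
  have "((\<lambda>t. 1 / (1 + t * K' t / K t)) \<longlongrightarrow> 1 / (1 + \<theta>)) (at_right 0)"
    using \<open>\<theta> > -1\<close> by (intro tendsto_divide tendsto_const tendsto_add smooth_RV0_index[OF K]) auto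
  moreover have "\<forall>\<^sub>F t in at_right 0. 1 / (1 + t * K' t / K t) = K t / (K t + t * K' t)"
    using ev by eventually_elim (use smooth_RV0D(1)[OF K] in \<open>force simp: field_simps\<close>)
  ultimately show "((\<lambda>t. K t / (K t + t * K' t)) \<longlongrightarrow> 1/(\<theta>+1)) (at_right 0)"
    by (auto elim: Lim_transform_eventually simp: add.commute)
qed

lemma smooth_RV0_head_integral:
  assumes K: "smooth_RV0 \<theta> K K' t0" and "\<theta> > -1" and bdd: "\<forall>t\<in>{0<..t0}. K t \<le> M"
  shows "\<forall>t\<in>{0<..<t0}. K integrable_on {0..t} \<and> integral {0..t} K > 0 \<and>
           ((\<lambda>t. integral {0..t} K) has_real_derivative K t) (at t)"
    and "((\<lambda>t. integral {0..t} K) \<longlongrightarrow> 0) (at_right 0)"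
    and "((\<lambda>t. integral {0..t} K / (t * K t)) \<longlongrightarrow> 1/(\<theta>+1)) (at_right 0)"
proof -
  have K_props: "\<forall>t\<in>{0<..<t0}. 0 < K t \<and> K t \<le> M \<and> isCont K t"
    using smooth_RV0D[OF K] bdd by auto
  have "t0 > 0" using K unfolding smooth_RV0_def by simp
  note head = head_integral_bounds[OF this K_props]
  have deriv: "\<forall>t\<in>{0<..<t0}. ((\<lambda>t. integral {0..t} K) has_real_derivative K t) (at t)"
    using K_props head(1) by (auto intro!: head_integral_has_derivative)
  with head(1) show "\<forall>t\<in>{0<..<t0}. K integrable_on {0..t} \<and> integral {0..t} K > 0 \<and>
      ((\<lambda>t. integral {0..t} K) has_real_derivative K t) (at t)" by blast
  show "((\<lambda>t. integral {0..t} K) \<longlongrightarrow> 0) (at_right 0)" by (rule head(2))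
  have ev: "\<forall>\<^sub>F t in at_right 0. t \<in> {0<..<t0}"
    using K unfolding smooth_RV0_def by (auto simp: eventually_at_right_field)
  show "((\<lambda>t. integral {0..t} K / (t * K t)) \<longlongrightarrow> 1/(\<theta>+1)) (at_right 0)"
  proof (rule smooth_RV0_head_ratio[OF K \<open>\<theta> > -1\<close> head(2)])
    show "\<forall>\<^sub>F t in at_right 0. ((\<lambda>t. integral {0..t} K) has_real_derivative K t) (at t)"
      using ev by eventually_elim (use deriv in blast)
    show "((\<lambda>t. t * K t) \<longlongrightarrow> 0) (at_right 0)"
    proof (rule tendsto_sandwich[OF _ _ tendsto_const tendsto_mult_right_zero[OF tendsto_ident_at]])
      show "\<forall>\<^sub>F t in at_right 0. 0 \<le> t * K t"
        using ev by eventually_elim (use K_props in \<open>auto intro!: mult_nonneg_nonneg less_imp_le\<close>)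
      show "\<forall>\<^sub>F t in at_right 0. t * K t \<le> M * t"
        using ev by eventually_elim (use K_props in \<open>auto simp: mult.commute intro!: mult_right_mono\<close>)
    qed
  qed
qed

section \<open>The implicitly defined inverse\<close>

lemma decreasing_to_zero:
  fixes F g :: "real \<Rightarrow> real"
  assumes F_deriv: "\<forall>x\<ge>D. (F has_real_derivative - g x) (at x)" and g_pos: "\<forall>x\<ge>D. g x > 0"
    and F_lim: "(F \<longlongrightarrow> 0) at_top"
  shows "\<forall>x y. D \<le> x \<longrightarrow> x < y \<longrightarrow> F y < F x"
    and "\<forall>x\<ge>D. F x > 0"
    and "\<forall>s\<in>{0<..<F D}. \<exists>!x. x \<ge> D \<and> F x = s"
proof -
  show dec: "\<forall>x y. D \<le> x \<longrightarrow> x < y \<longrightarrow> F y < F x"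
  proof (intro allI impI)
    fix x y :: real assume "D \<le> x" "x < y"
    with F_deriv g_pos show "F y < F x"
      by (intro DERIV_neg_imp_decreasing[OF \<open>x < y\<close>]) (metis order_trans neg_less_0_iff_less)
  qed
  show F_pos: "\<forall>x\<ge>D. F x > 0"
  proof (intro allI impI)
    fix x assume "x \<ge> D"
    have "F (x + 1) \<ge> 0"
    proof (rule tendsto_upperbound[OF F_lim])
      show "\<forall>\<^sub>F y in at_top. F y \<le> F (x + 1)"
        using eventually_gt_at_top[of "x + 1"]
      proof eventually_elim
        case (elim y)
        with dec \<open>x \<ge> D\<close> show ?case by (simp add: less_imp_le)
      qed
    qed simp
    moreover have "F (x + 1) < F x" using dec \<open>x \<ge> D\<close> by simp
    ultimately show "F x > 0" by linarith
  qed
  show "\<forall>s\<in>{0<..<F D}. \<exists>!x. x \<ge> D \<and> F x = s"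
  proof
    fix s assume s: "s \<in> {0<..<F D}"
    obtain x1 where x1: "\<And>x. x \<ge> x1 \<Longrightarrow> F x < s"
      using order_tendstoD(2)[OF F_lim, of s] s by (auto simp: eventually_at_top_linorder)
    have "F (max x1 D) \<le> s" "s \<le> F D" "D \<le> max x1 D" using x1[of "max x1 D"] s by auto
    moreover have "\<forall>x. D \<le> x \<and> x \<le> max x1 D \<longrightarrow> isCont F x"
      using F_deriv DERIV_isCont by blast
    ultimately obtain x where "D \<le> x" "F x = s" by (metis IVT2)
    moreover have "y = x" if "D \<le> y" "F y = s" for y
      using dec that \<open>D \<le> x\<close> \<open>F x = s\<close> by (metis linorder_neq_iff)
    ultimately show "\<exists>!x. x \<ge> D \<and> F x = s" by blast
  qed
qed

lemma decreasing_inverse_at_top: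
  fixes F H :: "real \<Rightarrow> real"
  assumes dec: "\<forall>x y. D \<le> x \<longrightarrow> x < y \<longrightarrow> F y < F x" and F_pos: "\<forall>x\<ge>D. F x > 0"
    and H: "\<forall>s\<in>{0<..<F D}. H s \<ge> D \<and> F (H s) = s"
  shows "filterlim H at_top (at_right 0)"
  unfolding filterlim_at_top
proof
  fix Z
  have FZ: "F (max Z D) \<le> F D" using dec by (cases "Z \<le> D") (auto simp: max_def less_imp_le)
  have "F (max Z D) > 0" using F_pos by simp
  then have "\<forall>\<^sub>F s in at_right 0. 0 < s \<and> s < F (max Z D)"
    by (auto simp: eventually_at_right_field)
  then show "\<forall>\<^sub>F s in at_right 0. Z \<le> H s"
  proof eventually_elim
    case (elim s)
    with FZ H have "H s \<ge> D" "F (H s) = s" by auto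
    show "Z \<le> H s"
    proof (rule ccontr)
      assume "\<not> Z \<le> H s"
      with dec \<open>H s \<ge> D\<close> have "F (max Z D) < F (H s)" by auto
      with elim \<open>F (H s) = s\<close> show False by simp
    qed
  qed
qed

lemma decreasing_inverse:
  fixes F g :: "real \<Rightarrow> real"
  assumes F_deriv: "\<forall>x\<ge>D. (F has_real_derivative - g x) (at x)" and g_pos: "\<forall>x\<ge>D. g x > 0"
    and F_lim: "(F \<longlongrightarrow> 0) at_top"
  obtains H where "\<forall>x\<ge>D. F x > 0" and "\<forall>x\<ge>D. \<forall>y\<ge>D. F x = F y \<longrightarrow> x = y"
    and "\<forall>s\<in>{0<..<F D}. H s > D \<and> F (H s) = s \<and> (H has_real_derivative - 1 / g (H s)) (at s)"
    and "filterlim H at_top (at_right 0)"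
proof -
  note F = decreasing_to_zero[OF F_deriv g_pos F_lim]
  have inj: "\<forall>x\<ge>D. \<forall>y\<ge>D. F x = F y \<longrightarrow> x = y" using F(1) by (metis linorder_neq_iff)
  define H where "H s = (THE x. x \<ge> D \<and> F x = s)" for s
  have H: "H s \<ge> D" "F (H s) = s" if "s \<in> {0<..<F D}" for s
    using theI'[OF F(3)[rule_format, OF that]] unfolding H_def by auto
  have H_gt: "H s > D" if "s \<in> {0<..<F D}" for s
    using H[OF that] that by (cases "H s = D") auto
  have H_deriv: "(H has_real_derivative - 1 / g (H s)) (at s)" if s: "s \<in> {0<..<F D}" for s
  proof -
    define d where "d = (H s - D) / 2"
    have "isCont H (F (H s))"
    proof (rule isCont_inverse_function[where f = F and d = d])
      show "d > 0" using H_gt[OF s] by (simp add: d_def)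
      fix z assume "\<bar>z - H s\<bar> \<le> d"
      then have "z > D" using H_gt[OF s] unfolding d_def abs_le_iff by (simp add: field_simps)
      then show "isCont F z" using F_deriv DERIV_isCont[of F "- g z" z] by simp
      have "F z \<in> {0<..<F D}" using F(1,2) \<open>z > D\<close> by auto
      then show "H (F z) = z" using H[of "F z"] inj \<open>z > D\<close> by auto
    qed
    then have "isCont H s" using H[OF s] by simp
    moreover have "(F has_real_derivative - g (H s)) (at (H s))" using F_deriv H(1)[OF s] by simp
    moreover have "- g (H s) \<noteq> 0" using g_pos H(1)[OF s] by force
    ultimately have "(H has_real_derivative inverse (- g (H s))) (at s)"
      using H s by (intro DERIV_inverse_function[where f = F and a = 0 and b = "F D"]) auto
    then show ?thesis by (simp add: divide_inverse)
  qed
  have "filterlim H at_top (at_right 0)"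
    using H by (intro decreasing_inverse_at_top[OF F(1,2)]) auto
  with F(2) inj H H_gt H_deriv show thesis by (intro that) auto
qed

lemma implicit_inverse:
  fixes F g G K :: "real \<Rightarrow> real"
  assumes F_deriv: "\<forall>x\<ge>D. (F has_real_derivative - g x) (at x)" and g_pos: "\<forall>x\<ge>D. g x > 0"
    and F_lim: "(F \<longlongrightarrow> 0) at_top"
    and "t0 > 0" and G: "\<forall>t\<in>{0<..<t0}. G t > 0 \<and> (G has_real_derivative K t) (at t)"
    and G_lim: "(G \<longlongrightarrow> 0) (at_right 0)"
  obtains \<beta> \<Phi> where "0 < \<beta>" "\<beta> \<le> t0"
    and "\<forall>t\<in>{0<..<\<beta>}. \<Phi> t > D \<and> F (\<Phi> t) = G t \<and> (\<forall>x\<ge>D. F x = G t \<longrightarrow> x = \<Phi> t) \<and>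
           (\<Phi> has_real_derivative - K t / g (\<Phi> t)) (at t)"
    and "filterlim \<Phi> at_top (at_right 0)"
proof -
  obtain H where F_pos: "\<forall>x\<ge>D. F x > 0" and inj: "\<forall>x\<ge>D. \<forall>y\<ge>D. F x = F y \<longrightarrow> x = y"
    and H: "\<forall>s\<in>{0<..<F D}. H s > D \<and> F (H s) = s \<and> (H has_real_derivative - 1 / g (H s)) (at s)"
    and H_lim: "filterlim H at_top (at_right 0)"
    using decreasing_inverse[OF F_deriv g_pos F_lim] by blast
  obtain b where "b > 0" and b: "\<And>t. 0 < t \<Longrightarrow> t < b \<Longrightarrow> G t < F D"
    using order_tendstoD(2)[OF G_lim, of "F D"] F_pos by (auto simp: eventually_at_right_field)
  define \<beta> where "\<beta> = min b t0"
  have "0 < \<beta>" "\<beta> \<le> t0" using \<open>b > 0\<close> \<open>t0 > 0\<close> by (auto simp: \<beta>_def)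
  have \<Phi>: "\<forall>t\<in>{0<..<\<beta>}. H (G t) > D \<and> F (H (G t)) = G t \<and> (\<forall>x\<ge>D. F x = G t \<longrightarrow> x = H (G t)) \<and>
      ((\<lambda>t. H (G t)) has_real_derivative - K t / g (H (G t))) (at t)"
  proof
    fix t assume t: "t \<in> {0<..<\<beta>}"
    then have "G t \<in> {0<..<F D}" and G_deriv: "(G has_real_derivative K t) (at t)"
      using b G \<open>\<beta> \<le> t0\<close> by (auto simp: \<beta>_def)
    then have HG: "H (G t) > D" "F (H (G t)) = G t"
      and H_deriv: "(H has_real_derivative - 1 / g (H (G t))) (at (G t))"
      using H by auto
    have "x = H (G t)" if "x \<ge> D" "F x = G t" for x
      using inj HG that by (metis less_imp_le)
    moreover from DERIV_chain2[OF H_deriv G_deriv]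
    have "((\<lambda>t. H (G t)) has_real_derivative - K t / g (H (G t))) (at t)" by simp
    ultimately show "H (G t) > D \<and> F (H (G t)) = G t \<and> (\<forall>x\<ge>D. F x = G t \<longrightarrow> x = H (G t)) \<and>
      ((\<lambda>t. H (G t)) has_real_derivative - K t / g (H (G t))) (at t)"
      using HG by blast
  qed
  have \<Phi>_lim: "filterlim (\<lambda>t. H (G t)) at_top (at_right 0)"
  proof (rule filterlim_compose[OF H_lim tendsto_imp_filterlim_at_right[OF G_lim]])
    show "\<forall>\<^sub>F t in at_right 0. G t > 0"
      using G \<open>t0 > 0\<close> by (auto simp: eventually_at_right_field)
  qed
  show thesis by (rule that[OF \<open>0 < \<beta>\<close> \<open>\<beta> \<le> t0\<close> \<Phi> \<Phi>_lim])
qed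

lemma implicit_inverse_C2:
  assumes g: "smooth_RV s g g' B" and K: "smooth_RV0 \<theta> K K' t0" and "\<beta> \<le> t0"
    and \<Phi>: "\<forall>t\<in>{0<..<\<beta>}. \<Phi> t \<ge> B \<and> (\<Phi> has_real_derivative - K t / g (\<Phi> t)) (at t)"
  defines "\<Phi>1 \<equiv> \<lambda>t. - K t / g (\<Phi> t)"
    and "\<Phi>2 \<equiv> \<lambda>t. - (K' t + (K t)\<^sup>2 * g' (\<Phi> t) / (g (\<Phi> t))\<^sup>2) / g (\<Phi> t)"
  shows "\<forall>t\<in>{0<..<\<beta>}. (\<Phi>1 has_real_derivative \<Phi>2 t) (at t)"
    and "continuous_on {0<..<\<beta>} \<Phi>2"
proof -
  have facts: "(\<Phi> has_real_derivative \<Phi>1 t) (at t)" "(K has_real_derivative K' t) (at t)"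
    "isCont K' t" "g (\<Phi> t) > 0" "(g has_real_derivative g' (\<Phi> t)) (at (\<Phi> t))" "isCont g' (\<Phi> t)"
    if "t \<in> {0<..<\<beta>}" for t
    using \<Phi> smooth_RV0D[OF K, of t] smooth_RVD[OF g, of "\<Phi> t"] that \<open>\<beta> \<le> t0\<close>
    by (auto simp: \<Phi>1_def)
  have g\<Phi>_deriv: "((\<lambda>t. g (\<Phi> t)) has_real_derivative g' (\<Phi> t) * \<Phi>1 t) (at t)"
    if "t \<in> {0<..<\<beta>}" for t
    using DERIV_chain2[OF facts(5,1)[OF that]] .
  show \<Phi>1_deriv: "\<forall>t\<in>{0<..<\<beta>}. (\<Phi>1 has_real_derivative \<Phi>2 t) (at t)"
  proof
    fix t assume t: "t \<in> {0<..<\<beta>}"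
    have "g (\<Phi> t) \<noteq> 0" using facts(4)[OF t] by simp
    from DERIV_minus[OF DERIV_divide[OF facts(2)[OF t] g\<Phi>_deriv[OF t] this]]
    have "((\<lambda>t. - (K t / g (\<Phi> t))) has_real_derivative
        - ((K' t * g (\<Phi> t) - K t * (g' (\<Phi> t) * \<Phi>1 t)) / (g (\<Phi> t) * g (\<Phi> t)))) (at t)" .
    moreover have "(\<lambda>t. - (K t / g (\<Phi> t))) = \<Phi>1" by (simp add: \<Phi>1_def fun_eq_iff)
    moreover have "- ((K' t * g (\<Phi> t) - K t * (g' (\<Phi> t) * \<Phi>1 t)) / (g (\<Phi> t) * g (\<Phi> t))) = \<Phi>2 t"
      using \<open>g (\<Phi> t) \<noteq> 0\<close> by (simp add: \<Phi>1_def \<Phi>2_def field_simps power2_eq_square)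
    ultimately show "(\<Phi>1 has_real_derivative \<Phi>2 t) (at t)" by simp
  qed
  show "continuous_on {0<..<\<beta>} \<Phi>2"
  proof (intro continuous_at_imp_continuous_on ballI)
    fix t assume t: "t \<in> {0<..<\<beta>}"
    have "isCont \<Phi> t" "isCont \<Phi>1 t" "isCont K t" "isCont (\<lambda>t. g (\<Phi> t)) t"
      using facts(1,2)[OF t] \<Phi>1_deriv g\<Phi>_deriv[OF t] t by (auto intro: DERIV_isCont)
    moreover have "isCont (\<lambda>t. g' (\<Phi> t)) t"
      using facts(6)[OF t] \<open>isCont \<Phi> t\<close> by (rule isCont_o2[rotated])
    ultimately show "isCont \<Phi>2 t"
      unfolding \<Phi>2_def using facts(3,4)[OF t] by (intro continuous_intros) auto
  qed
qed

lemma inverse_ratio_limit: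
  fixes F g G K \<Phi> :: "real \<Rightarrow> real"
  assumes F: "((\<lambda>x. F x / (x * g x)) \<longlongrightarrow> 1/\<sigma>) at_top" "\<sigma> \<noteq> 0"
    and G: "((\<lambda>t. G t / (t * K t)) \<longlongrightarrow> c) (at_right 0)" "c \<noteq> 0"
    and \<Phi>: "filterlim \<Phi> at_top (at_right 0)" and eq: "\<forall>\<^sub>F t in at_right 0. F (\<Phi> t) = G t"
  shows "((\<lambda>t. \<Phi> t * g (\<Phi> t) / (t * K t)) \<longlongrightarrow> \<sigma> * c) (at_right 0)"
proof -
  have "((\<lambda>x. x * g x / F x) \<longlongrightarrow> \<sigma>) at_top"
    using tendsto_inverse[OF F(1)] F(2) by simp
  from tendsto_mult[OF filterlim_compose[OF this \<Phi>] G(1)]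
  have "((\<lambda>t. \<Phi> t * g (\<Phi> t) / F (\<Phi> t) * (G t / (t * K t))) \<longlongrightarrow> \<sigma> * c) (at_right 0)" .
  moreover have "\<forall>\<^sub>F t in at_right 0. G t / (t * K t) \<noteq> 0"
    using tendsto_imp_eventually_ne[OF G] .
  with eq have "\<forall>\<^sub>F t in at_right 0.
      \<Phi> t * g (\<Phi> t) / F (\<Phi> t) * (G t / (t * K t)) = \<Phi> t * g (\<Phi> t) / (t * K t)"
    by eventually_elim auto
  ultimately show ?thesis by (rule Lim_transform_eventually)
qed

(* Everything is driven by r = \<Phi> g(\<Phi>) / (t K): t \<Phi>1/\<Phi> = -1/r, and
   \<Phi> \<Phi>2/\<Phi>1\<^sup>2 = - \<Phi> g'(\<Phi>)/g(\<Phi>) - (t K'/K) r. *)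
lemma implicit_inverse_asymptotics:
  fixes g g' K K' \<Phi> :: "real \<Rightarrow> real"
  assumes g: "smooth_RV (-1-\<sigma>) g g' B" and K: "smooth_RV0 \<theta> K K' t0"
    and "\<sigma> > 0" "\<theta> > -1" and \<Phi>: "filterlim \<Phi> at_top (at_right 0)"
    and ratio: "((\<lambda>t. \<Phi> t * g (\<Phi> t) / (t * K t)) \<longlongrightarrow> \<sigma>/(\<theta>+1)) (at_right 0)"
  defines "\<Phi>1 \<equiv> \<lambda>t. - K t / g (\<Phi> t)"
    and "\<Phi>2 \<equiv> \<lambda>t. - (K' t + (K t)\<^sup>2 * g' (\<Phi> t) / (g (\<Phi> t))\<^sup>2) / g (\<Phi> t)"
  shows "((\<lambda>t. t * \<Phi>1 t / \<Phi> t) \<longlongrightarrow> -((\<theta>+1)/\<sigma>)) (at_right 0)"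
    and "((\<lambda>t. \<Phi> t * \<Phi>2 t / (\<Phi>1 t)\<^sup>2) \<longlongrightarrow> 1 + \<sigma>/(\<theta>+1)) (at_right 0)"
proof -
  have t0: "t0 > 0" using K unfolding smooth_RV0_def by simp
  have "\<forall>\<^sub>F t in at_right 0. t \<in> {0<..t0}"
    using t0 by (auto simp: eventually_at_right_field)
  moreover have "\<forall>\<^sub>F t in at_right 0. \<Phi> t \<ge> B" using \<Phi> by (simp add: filterlim_at_top)
  ultimately have ev: "\<forall>\<^sub>F t in at_right 0. t \<in> {0<..t0} \<and> \<Phi> t \<ge> B"
    by (rule eventually_conj)
  have pos: "t > 0" "K t > 0" "\<Phi> t > 0" "g (\<Phi> t) > 0" if "t \<in> {0<..t0} \<and> \<Phi> t \<ge> B" for t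
    using that smooth_RV0D(1)[OF K] smooth_RVD(1,4)[OF g] by auto
  have "((\<lambda>t. - inverse (\<Phi> t * g (\<Phi> t) / (t * K t))) \<longlongrightarrow> - inverse (\<sigma>/(\<theta>+1))) (at_right 0)"
    using \<open>\<sigma> > 0\<close> \<open>\<theta> > -1\<close> by (intro tendsto_minus tendsto_inverse ratio) auto
  also have "- inverse (\<sigma>/(\<theta>+1)) = -((\<theta>+1)/\<sigma>)" by simp
  finally show "((\<lambda>t. t * \<Phi>1 t / \<Phi> t) \<longlongrightarrow> -((\<theta>+1)/\<sigma>)) (at_right 0)"
  proof (rule Lim_transform_eventually)
    show "\<forall>\<^sub>F t in at_right 0. - inverse (\<Phi> t * g (\<Phi> t) / (t * K t)) = t * \<Phi>1 t / \<Phi> t"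
      using ev
    proof eventually_elim
      case (elim t)
      with pos[OF elim] show ?case by (simp add: \<Phi>1_def field_simps)
    qed
  qed
  have K_index: "((\<lambda>t. t * K' t / K t) \<longlongrightarrow> \<theta>) (at_right 0)"
    using K unfolding smooth_RV0_def by blast
  have g_index: "((\<lambda>t. \<Phi> t * g' (\<Phi> t) / g (\<Phi> t)) \<longlongrightarrow> -1-\<sigma>) (at_right 0)"
    using filterlim_compose[OF smooth_RV_index[OF g] \<Phi>] by simp
  have "((\<lambda>t. - (\<Phi> t * g' (\<Phi> t) / g (\<Phi> t)) - t * K' t / K t * (\<Phi> t * g (\<Phi> t) / (t * K t)))
      \<longlongrightarrow> - (-1-\<sigma>) - \<theta> * (\<sigma>/(\<theta>+1))) (at_right 0)"
    by (intro tendsto_diff tendsto_minus tendsto_mult g_index K_index ratio)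
  also have "- (-1-\<sigma>) - \<theta> * (\<sigma>/(\<theta>+1)) = 1 + \<sigma>/(\<theta>+1)"
    using \<open>\<theta> > -1\<close> by (simp add: field_simps)
  finally show "((\<lambda>t. \<Phi> t * \<Phi>2 t / (\<Phi>1 t)\<^sup>2) \<longlongrightarrow> 1 + \<sigma>/(\<theta>+1)) (at_right 0)"
  proof (rule Lim_transform_eventually)
    show "\<forall>\<^sub>F t in at_right 0.
        - (\<Phi> t * g' (\<Phi> t) / g (\<Phi> t)) - t * K' t / K t * (\<Phi> t * g (\<Phi> t) / (t * K t))
        = \<Phi> t * \<Phi>2 t / (\<Phi>1 t)\<^sup>2"
      using ev
    proof eventually_elim
      case (elim t)
      with pos[OF elim] show ?case by (simp add: \<Phi>1_def \<Phi>2_def field_simps power2_eq_square)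
    qed
  qed
qed

lemma integral_equation_solution:
  fixes g g' K K' :: "real \<Rightarrow> real"
  assumes "\<sigma> > 0" "\<theta> > -1" and g: "smooth_RV (-1-\<sigma>) g g' B" and K: "smooth_RV0 \<theta> K K' t0"
    and bdd: "\<forall>t\<in>{0<..t0}. K t \<le> M"
  obtains \<beta> \<Phi> D where "0 < \<beta>" "\<beta> \<le> t0"
    and "\<forall>t\<in>{0<..<\<beta>}. K integrable_on {0..t} \<and> D \<le> \<Phi> t \<and> g integrable_on {\<Phi> t..} \<and>
           integral {\<Phi> t..} g = integral {0..t} K \<and>
           (\<forall>x\<ge>D. g integrable_on {x..} \<and> integral {x..} g = integral {0..t} K \<longrightarrow> x = \<Phi> t)"
    and "\<forall>t\<in>{0<..<\<beta>}. \<Phi> t \<ge> B \<and> (\<Phi> has_real_derivative - K t / g (\<Phi> t)) (at t)"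
    and "filterlim \<Phi> at_top (at_right 0)"
    and "((\<lambda>t. \<Phi> t * g (\<Phi> t) / (t * K t)) \<longlongrightarrow> \<sigma>/(\<theta>+1)) (at_right 0)"
proof -
  define F where "F x = integral {x..} g" for x
  obtain D where "D \<ge> B" and g_int: "\<forall>x\<ge>D. g integrable_on {x..}"
    and F_deriv: "\<forall>x\<ge>D. (F has_real_derivative - g x) (at x)"
    and "\<forall>x\<ge>D. F x > 0" and F_lim: "(F \<longlongrightarrow> 0) at_top"
    and F_ratio: "((\<lambda>x. F x / (x * g x)) \<longlongrightarrow> 1/\<sigma>) at_top"
    by (rule smooth_RV_tail_integral[OF g \<open>\<sigma> > 0\<close>, folded F_def])
  have g_pos: "\<forall>x\<ge>D. g x > 0" using smooth_RVD(1)[OF g] \<open>D \<ge> B\<close> by simp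
  note head = smooth_RV0_head_integral[OF K \<open>\<theta> > -1\<close> bdd]
  have G: "\<forall>t\<in>{0<..<t0}. integral {0..t} K > 0 \<and>
      ((\<lambda>t. integral {0..t} K) has_real_derivative K t) (at t)"
    using head(1) by blast
  have "t0 > 0" using K unfolding smooth_RV0_def by simp
  obtain \<beta> \<Phi> where "0 < \<beta>" "\<beta> \<le> t0" and \<Phi>: "\<forall>t\<in>{0<..<\<beta>}. \<Phi> t > D \<and> F (\<Phi> t) = integral {0..t} K \<and>
      (\<forall>x\<ge>D. F x = integral {0..t} K \<longrightarrow> x = \<Phi> t) \<and> (\<Phi> has_real_derivative - K t / g (\<Phi> t)) (at t)"
    and \<Phi>_lim: "filterlim \<Phi> at_top (at_right 0)"
    by (rule implicit_inverse[OF F_deriv g_pos F_lim \<open>t0 > 0\<close> G head(2)])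
  have "\<forall>\<^sub>F t in at_right 0. F (\<Phi> t) = integral {0..t} K"
    using \<Phi> \<open>0 < \<beta>\<close> by (auto simp: eventually_at_right_field)
  from inverse_ratio_limit[OF F_ratio _ head(3) _ \<Phi>_lim this] \<open>\<sigma> > 0\<close> \<open>\<theta> > -1\<close>
  have "((\<lambda>t. \<Phi> t * g (\<Phi> t) / (t * K t)) \<longlongrightarrow> \<sigma>/(\<theta>+1)) (at_right 0)" by simp
  moreover have "\<forall>t\<in>{0<..<\<beta>}. \<Phi> t \<ge> B \<and> (\<Phi> has_real_derivative - K t / g (\<Phi> t)) (at t)"
    using \<Phi> \<open>D \<ge> B\<close> by force
  moreover have "\<forall>t\<in>{0<..<\<beta>}. K integrable_on {0..t} \<and> D \<le> \<Phi> t \<and> g integrable_on {\<Phi> t..} \<and>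
      integral {\<Phi> t..} g = integral {0..t} K \<and>
      (\<forall>x\<ge>D. g integrable_on {x..} \<and> integral {x..} g = integral {0..t} K \<longrightarrow> x = \<Phi> t)"
  proof
    fix t assume t: "t \<in> {0<..<\<beta>}"
    then have "K integrable_on {0..t}" using head(1) \<open>\<beta> \<le> t0\<close> by simp
    moreover have "D < \<Phi> t" "F (\<Phi> t) = integral {0..t} K" "\<forall>x\<ge>D. F x = integral {0..t} K \<longrightarrow> x = \<Phi> t"
      using \<Phi> t by auto
    ultimately show "K integrable_on {0..t} \<and> D \<le> \<Phi> t \<and> g integrable_on {\<Phi> t..} \<and>
      integral {\<Phi> t..} g = integral {0..t} K \<and>
      (\<forall>x\<ge>D. g integrable_on {x..} \<and> integral {x..} g = integral {0..t} K \<longrightarrow> x = \<Phi> t)"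
      using g_int unfolding F_def by simp
  qed
  ultimately show thesis using that \<open>0 < \<beta>\<close> \<open>\<beta> \<le> t0\<close> \<Phi>_lim by blast
qed

lemma tail_head_inverse:
  fixes g g' K K' :: "real \<Rightarrow> real"
  assumes "\<sigma> > 0" "\<theta> > -1" and g: "smooth_RV (-1-\<sigma>) g g' B" and K: "smooth_RV0 \<theta> K K' t0"
    and bdd: "\<forall>t\<in>{0<..t0}. K t \<le> M"
  obtains \<beta> \<Phi> \<Phi>1 \<Phi>2 D where "\<beta> > 0"
    and "\<forall>t\<in>{0<..<\<beta>}. K integrable_on {0..t} \<and> D \<le> \<Phi> t \<and> g integrable_on {\<Phi> t..} \<and>
           integral {\<Phi> t..} g = integral {0..t} K \<and>
           (\<forall>x\<ge>D. g integrable_on {x..} \<and> integral {x..} g = integral {0..t} K \<longrightarrow> x = \<Phi> t)"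
    and "\<forall>t\<in>{0<..<\<beta>}. (\<Phi> has_real_derivative \<Phi>1 t) (at t)"
    and "\<forall>t\<in>{0<..<\<beta>}. (\<Phi>1 has_real_derivative \<Phi>2 t) (at t)"
    and "continuous_on {0<..<\<beta>} \<Phi>2"
    and "filterlim \<Phi> at_top (at_right 0)"
    and "smooth_RV0 (-((\<theta>+1)/\<sigma>)) \<Phi> \<Phi>1 (\<beta>/2)"
    and "((\<lambda>t. \<Phi> t * \<Phi>2 t / (\<Phi>1 t)\<^sup>2) \<longlongrightarrow> 1 + \<sigma>/(\<theta>+1)) (at_right 0)"
proof -
  obtain \<beta> \<Phi> D where "0 < \<beta>" "\<beta> \<le> t0"
    and block: "\<forall>t\<in>{0<..<\<beta>}. K integrable_on {0..t} \<and> D \<le> \<Phi> t \<and> g integrable_on {\<Phi> t..} \<and>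
           integral {\<Phi> t..} g = integral {0..t} K \<and>
           (\<forall>x\<ge>D. g integrable_on {x..} \<and> integral {x..} g = integral {0..t} K \<longrightarrow> x = \<Phi> t)"
    and \<Phi>: "\<forall>t\<in>{0<..<\<beta>}. \<Phi> t \<ge> B \<and> (\<Phi> has_real_derivative - K t / g (\<Phi> t)) (at t)"
    and \<Phi>_lim: "filterlim \<Phi> at_top (at_right 0)"
    and ratio: "((\<lambda>t. \<Phi> t * g (\<Phi> t) / (t * K t)) \<longlongrightarrow> \<sigma>/(\<theta>+1)) (at_right 0)"
    by (rule integral_equation_solution[OF assms])
  define \<Phi>1 where "\<Phi>1 t = - K t / g (\<Phi> t)" for t
  define \<Phi>2 where "\<Phi>2 t = - (K' t + (K t)\<^sup>2 * g' (\<Phi> t) / (g (\<Phi> t))\<^sup>2) / g (\<Phi> t)" for t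
  have \<Phi>_deriv: "\<forall>t\<in>{0<..<\<beta>}. (\<Phi> has_real_derivative \<Phi>1 t) (at t)"
    using \<Phi> by (simp add: \<Phi>1_def)
  note C2 = implicit_inverse_C2[OF g K \<open>\<beta> \<le> t0\<close> \<Phi>,
      folded \<Phi>1_def[abs_def] \<Phi>2_def[abs_def], folded \<Phi>1_def \<Phi>2_def]
  note asymp = implicit_inverse_asymptotics[OF g K \<open>\<sigma> > 0\<close> \<open>\<theta> > -1\<close> \<Phi>_lim ratio,
      folded \<Phi>1_def \<Phi>2_def]
  have "smooth_RV0 (-((\<theta>+1)/\<sigma>)) \<Phi> \<Phi>1 (\<beta>/2)"
    unfolding smooth_RV0_def
  proof (intro conjI ballI asymp(1))
    fix t assume "t \<in> {0<..\<beta>/2}"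
    then have t: "t \<in> {0<..<\<beta>}" using \<open>0 < \<beta>\<close> by auto
    show "\<Phi> t > 0" using \<Phi> t smooth_RVD(4)[OF g, of "\<Phi> t"] by force
    show "(\<Phi> has_real_derivative \<Phi>1 t) (at t)" using \<Phi>_deriv t by blast
    show "isCont \<Phi>1 t" using C2(1) t DERIV_isCont by blast
  qed (use \<open>0 < \<beta>\<close> in simp)
  from that[OF \<open>0 < \<beta>\<close> block \<Phi>_deriv C2 \<Phi>_lim this asymp(2)] show thesis .
qed

section \<open>Iterated logarithms and the growth of L\<close>

lemma ln_ratio_tendsto_1:
  fixes x y :: "'a \<Rightarrow> real"
  assumes lim: "((\<lambda>t. x t / y t) \<longlongrightarrow> c) F" and "c > 0" and y: "filterlim y at_top F"
  shows "((\<lambda>t. ln (x t) / ln (y t)) \<longlongrightarrow> 1) F"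
proof -
  have ln_y: "filterlim (\<lambda>t. ln (y t)) at_top F" by (rule filterlim_compose[OF ln_at_top y])
  have "((\<lambda>t. ln (x t / y t) * inverse (ln (y t)) + 1) \<longlongrightarrow> ln c * 0 + 1) F"
    using \<open>c > 0\<close> by (intro tendsto_add tendsto_mult tendsto_ln lim tendsto_inverse_0_at_top ln_y) auto
  then have lim1: "((\<lambda>t. ln (x t / y t) * inverse (ln (y t)) + 1) \<longlongrightarrow> 1) F" by simp
  have "\<forall>\<^sub>F t in F. x t / y t > 0" using lim \<open>c > 0\<close> by (rule order_tendstoD)
  moreover have "\<forall>\<^sub>F t in F. y t > 1" "\<forall>\<^sub>F t in F. ln (y t) > 0"
    using y ln_y by (simp_all add: filterlim_at_top_dense)
  ultimately have "\<forall>\<^sub>F t in F. ln (x t / y t) * inverse (ln (y t)) + 1 = ln (x t) / ln (y t)"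
  proof eventually_elim
    case (elim t)
    then have "x t > 0" by (simp add: zero_less_divide_iff)
    with elim have "ln (x t / y t) = ln (x t) - ln (y t)" by (simp add: ln_div)
    with elim show ?case by (simp add: field_simps)
  qed
  with lim1 show ?thesis by (rule Lim_transform_eventually)
qed

lemma logm_at_top:
  assumes "filterlim b at_top F"
  shows "filterlim (\<lambda>t. logm m (b t)) at_top F"
proof (induction m)
  case 0
  then show ?case using assms by (simp add: logm_def)
next
  case (Suc m)
  then show ?case using filterlim_compose[OF ln_at_top] by (simp add: logm_def)
qed

lemma iterated_logs_ratio:
  fixes a b :: "'a \<Rightarrow> real"
  assumes b: "filterlim b at_top F" and lim: "((\<lambda>t. ln (a t) / ln (b t)) \<longlongrightarrow> \<alpha>) F" and "\<alpha> > 0"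
    and "m \<ge> 1"
  shows "((\<lambda>t. logm m (a t) / logm m (b t)) \<longlongrightarrow> (if m = 1 then \<alpha> else 1)) F"
  using \<open>m \<ge> 1\<close>
proof (induction m rule: dec_induct)
  case base
  then show ?case using lim by (simp add: logm_def)
next
  case (step m)
  have "(if m = 1 then \<alpha> else 1) > 0" using \<open>\<alpha> > 0\<close> by simp
  from ln_ratio_tendsto_1[OF step.IH this logm_at_top[OF b]] show ?case
    using step.hyps by (simp add: logm_def)
qed

lemma smooth_RV0_iterated_logs:
  assumes \<Phi>: "smooth_RV0 (-\<alpha>) \<Phi> \<Phi>1 t0" and "\<alpha> > 0"
  shows "\<forall>m::nat\<ge>1. ((\<lambda>t. logm m (\<Phi> t) / logm m (1 / t)) \<longlongrightarrow> (if m = 1 then \<alpha> else 1)) (at_right 0)"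
proof (intro allI impI)
  fix m :: nat assume "m \<ge> 1"
  have "filterlim (\<lambda>t::real. 1 / t) at_top (at_right 0)"
    using filterlim_inverse_at_top_right by (simp add: inverse_eq_divide)
  from iterated_logs_ratio[OF this smooth_RV0_ln_ratio[OF \<Phi>, unfolded minus_minus] \<open>\<alpha> > 0\<close> \<open>m \<ge> 1\<close>]
  show "((\<lambda>t. logm m (\<Phi> t) / logm m (1 / t)) \<longlongrightarrow> (if m = 1 then \<alpha> else 1)) (at_right 0)" .
qed

lemma slowly_varying_antiderivative_growth:
  assumes l: "smooth_RV 0 l l' B" and L: "\<forall>\<^sub>F y in at_top. (L has_real_derivative l y / y) (at y)"
    and "\<delta> > 0"
  shows "((\<lambda>y. L y / (l y * y powr \<delta>)) \<longlongrightarrow> 0) at_top"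
proof -
  have "((\<lambda>y. L y / y powr (\<delta>/2)) \<longlongrightarrow> 0) at_top"
  proof (rule lhospital_at_top_at_top[where g' = "\<lambda>y. \<delta>/2 * y powr (\<delta>/2 - 1)"])
    have "filterlim (\<lambda>y. exp (\<delta>/2 * ln y)) at_top at_top"
      using \<open>\<delta> > 0\<close>
      by (intro filterlim_compose[OF exp_at_top] filterlim_tendsto_pos_mult_at_top[OF tendsto_const _ ln_at_top]) simp
    moreover have "\<forall>\<^sub>F y in at_top. exp (\<delta>/2 * ln y) = y powr (\<delta>/2)"
      using eventually_gt_at_top[of 0] by eventually_elim (simp add: powr_def)
    ultimately show "filterlim (\<lambda>y. y powr (\<delta>/2)) at_top at_top"
      by (rule filterlim_mono_eventually[OF _ order_refl order_refl])
  next
    show "\<forall>\<^sub>F y in at_top. \<delta>/2 * y powr (\<delta>/2 - 1) \<noteq> 0"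
      using eventually_gt_at_top[of 0] by eventually_elim (use \<open>\<delta> > 0\<close> in simp)
    show "\<forall>\<^sub>F y in at_top. ((\<lambda>y. y powr (\<delta>/2)) has_real_derivative \<delta>/2 * y powr (\<delta>/2 - 1)) (at y)"
      using eventually_gt_at_top[of 0] by eventually_elim (rule has_real_derivative_powr)
    have "((\<lambda>y. l y / y powr (\<delta>/2) * (2/\<delta>)) \<longlongrightarrow> 0 * (2/\<delta>)) at_top"
      using \<open>\<delta> > 0\<close> by (intro tendsto_mult_right smooth_RV_o_powr[OF l]) auto
    moreover have "\<forall>\<^sub>F y in at_top. l y / y powr (\<delta>/2) * (2/\<delta>) = l y / y / (\<delta>/2 * y powr (\<delta>/2 - 1))"
      using eventually_gt_at_top[of 0]
    proof eventually_elim
      case (elim y)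
      then have "y powr (\<delta>/2 - 1) = y powr (\<delta>/2) / y" by (simp add: powr_diff)
      with elim \<open>\<delta> > 0\<close> show ?case by (simp add: field_simps)
    qed
    ultimately show "((\<lambda>y. l y / y / (\<delta>/2 * y powr (\<delta>/2 - 1))) \<longlongrightarrow> 0) at_top"
      by (auto elim: Lim_transform_eventually)
  qed (rule L)
  moreover have "((\<lambda>y. l y powr -1 / y powr (\<delta>/2)) \<longlongrightarrow> 0) at_top"
    using smooth_RV_o_powr[OF smooth_RV_powr[OF l, of "-1"]] \<open>\<delta> > 0\<close> by simp
  ultimately have "((\<lambda>y. L y / y powr (\<delta>/2) * (l y powr -1 / y powr (\<delta>/2))) \<longlongrightarrow> 0 * 0) at_top"
    by (rule tendsto_mult)
  moreover have "\<forall>\<^sub>F y in at_top. L y / y powr (\<delta>/2) * (l y powr -1 / y powr (\<delta>/2)) = L y / (l y * y powr \<delta>)"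
    using eventually_ge_at_top[of B]
  proof eventually_elim
    case (elim y)
    then have "y powr (\<delta>/2) * y powr (\<delta>/2) = y powr \<delta>" by (simp add: powr_add[symmetric])
    with smooth_RVD(1)[OF l elim] show ?case by (simp add: powr_minus field_simps)
  qed
  ultimately show ?thesis by (auto elim: Lim_transform_eventually)
qed

lemma NRV_minus_one_antiderivative_growth:
  assumes L1: "NRV (-1) L1" and L: "\<forall>x\<ge>A. (L has_real_derivative L1 x) (at x within {A..})"
    and "\<delta> > 0"
  shows "((\<lambda>y. L y / (y * L1 y * y powr \<delta>)) \<longlongrightarrow> 0) at_top"
proof -
  obtain L1' B where "smooth_RV (-1) L1 L1' B" using NRV_imp_smooth_RV[OF L1] .
  from smooth_RV_mult[OF smooth_RV_powr_ident[of 1] this]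
  have "smooth_RV 0 (\<lambda>y. y powr 1 * L1 y) (\<lambda>y. 1 * y powr (1 - 1) * L1 y + y powr 1 * L1' y) (max 1 B)"
    by simp
  then have l: "smooth_RV 0 (\<lambda>y. y * L1 y) (\<lambda>y. 1 * y powr (1 - 1) * L1 y + y powr 1 * L1' y) (max 1 B + 1)"
    by (rule smooth_RV_cong) auto
  have "\<forall>\<^sub>F y in at_top. (L has_real_derivative y * L1 y / y) (at y)"
    using eventually_gt_at_top[of "max A 0"]
  proof eventually_elim
    case (elim y)
    with L show ?case using has_real_derivative_at_within_Ici[of L "L1 y" y A] by simp
  qed
  from slowly_varying_antiderivative_growth[OF l this \<open>\<delta> > 0\<close>] show ?thesis .
qed

(* L(y)/(y L1(y)) = o(y^\<delta>) for every \<delta> > 0 and \<Phi>(t) t^(\<alpha>+1) \<rightarrow> 0; with \<delta> = 2/(\<alpha>+1)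
   their product is o(t^-2), which (\<Phi>/(t \<Phi>1))\<^sup>2 \<rightarrow> 1/\<alpha>\<^sup>2 turns into the claim. *)
lemma inverse_antiderivative_ratio_limit:
  fixes L L1 \<Phi> \<Phi>1 :: "real \<Rightarrow> real"
  assumes L1: "NRV (-1) L1" and L: "\<forall>x\<ge>A. (L has_real_derivative L1 x) (at x within {A..})"
    and \<Phi>: "smooth_RV0 (-\<alpha>) \<Phi> \<Phi>1 t0" "\<alpha> > 0" and \<Phi>_lim: "filterlim \<Phi> at_top (at_right 0)"
  shows "((\<lambda>t. L (\<Phi> t) / L1 (\<Phi> t) * (\<Phi> t / (\<Phi>1 t)\<^sup>2)) \<longlongrightarrow> 0) (at_right 0)"
proof -
  define \<delta> where "\<delta> = 2 / (\<alpha> + 1)"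
  have "\<delta> > 0" using \<open>\<alpha> > 0\<close> by (simp add: \<delta>_def)
  have ev: "\<forall>\<^sub>F t in at_right 0. t \<in> {0<..t0}"
    using \<Phi>(1) unfolding smooth_RV0_def by (auto simp: eventually_at_right_field)
  have pos: "t > 0" "\<Phi> t > 0" if "t \<in> {0<..t0}" for t
    using that smooth_RV0D(1)[OF \<Phi>(1)] by auto
  have "((\<lambda>t. L (\<Phi> t) / (\<Phi> t * L1 (\<Phi> t) * \<Phi> t powr \<delta>)) \<longlongrightarrow> 0) (at_right 0)"
    using NRV_minus_one_antiderivative_growth[OF L1 L \<open>\<delta> > 0\<close>] by (rule filterlim_compose[OF _ \<Phi>_lim])
  moreover have "((\<lambda>t. (\<Phi> t * t powr (\<alpha> + 1)) powr \<delta>) \<longlongrightarrow> 0) (at_right 0)"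
  proof (rule tendsto_zero_powrI[OF smooth_RV0_o_powr[OF \<Phi>(1)] tendsto_const])
    show "\<forall>\<^sub>F t in at_right 0. 0 \<le> \<Phi> t * t powr (\<alpha> + 1)"
      using ev by eventually_elim (use pos in \<open>auto intro!: mult_nonneg_nonneg less_imp_le\<close>)
  qed (use \<open>\<delta> > 0\<close> in simp_all)
  moreover have "((\<lambda>t. (inverse (t * \<Phi>1 t / \<Phi> t))\<^sup>2) \<longlongrightarrow> (inverse (-\<alpha>))\<^sup>2) (at_right 0)"
    using \<open>\<alpha> > 0\<close> by (intro tendsto_power tendsto_inverse smooth_RV0_index[OF \<Phi>(1)]) auto
  ultimately have "((\<lambda>t. L (\<Phi> t) / (\<Phi> t * L1 (\<Phi> t) * \<Phi> t powr \<delta>) * (\<Phi> t * t powr (\<alpha> + 1)) powr \<delta>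
      * (inverse (t * \<Phi>1 t / \<Phi> t))\<^sup>2) \<longlongrightarrow> 0 * 0 * (inverse (-\<alpha>))\<^sup>2) (at_right 0)"
    (is "(?f \<longlongrightarrow> _) _") by (intro tendsto_mult)
  then have lim: "(?f \<longlongrightarrow> 0) (at_right 0)" by simp
  have "\<forall>\<^sub>F t in at_right 0. ?f t = L (\<Phi> t) / L1 (\<Phi> t) * (\<Phi> t / (\<Phi>1 t)\<^sup>2)"
    using ev
  proof eventually_elim
    case (elim t)
    note t = pos[OF elim]
    have "(\<alpha> + 1) * \<delta> = 2" using \<open>\<alpha> > 0\<close> by (simp add: \<delta>_def field_simps)
    then have "(\<Phi> t * t powr (\<alpha> + 1)) powr \<delta> = \<Phi> t powr \<delta> * t powr 2"
      using t by (simp add: powr_mult powr_powr)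
    also have "t powr 2 = t\<^sup>2" using t by (simp add: powr_numeral)
    finally have "(\<Phi> t * t powr (\<alpha> + 1)) powr \<delta> = \<Phi> t powr \<delta> * t\<^sup>2" .
    with t show ?case by (simp add: field_simps power2_eq_square)
  qed
  with lim show ?thesis by (rule Lim_transform_eventually)
qed

lemma integrand_smooth_RV:
  assumes "NRV (-1) L1" and "nsv Lf B"
  obtains g' C where
    "smooth_RV (-1-\<rho>/2) (\<lambda>y. sqrt (L1 y) / (y powr ((\<rho> + 1) / 2) * sqrt (Lf y))) g' C"
proof -
  obtain L1' B1 where L1: "smooth_RV (-1) L1 L1' B1" using NRV_imp_smooth_RV[OF assms(1)] .
  obtain Lf' where Lf: "smooth_RV 0 Lf Lf' (max B 0 + 1)" using nsv_imp_smooth_RV[OF assms(2)] .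
  define c where "c = (\<rho> + 1) / 2"
  define C where "C = max (max B1 1) (max B 0 + 1)"
  have idx: "1/2 * -1 + -c + -(1/2) * 0 = -1-\<rho>/2" by (simp add: c_def field_simps)
  note prod = smooth_RV_mult[OF smooth_RV_mult[OF smooth_RV_powr[OF L1, of "1/2"] smooth_RV_powr_ident[of "-c"]]
      smooth_RV_powr[OF Lf, of "-(1/2)"], unfolded idx, folded C_def]
  show thesis
  proof (rule that[OF smooth_RV_cong[OF prod, where C = C]])
    show "\<forall>y\<ge>C. sqrt (L1 y) / (y powr ((\<rho> + 1) / 2) * sqrt (Lf y))
        = L1 y powr (1/2) * y powr -c * Lf y powr (-(1/2))"
    proof (intro allI impI)
      fix y assume "y \<ge> C"
      then have "L1 y > 0" "Lf y > 0" "y > 0"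
        using smooth_RVD(1)[OF L1] smooth_RVD(1,4)[OF Lf] by (auto simp: C_def)
      have "L1 y powr (1/2) * y powr -c * Lf y powr -(1/2) = L1 y powr (1/2) / (y powr c * Lf y powr (1/2))"
        by (simp add: powr_minus_divide)
      with \<open>L1 y > 0\<close> \<open>Lf y > 0\<close> show "sqrt (L1 y) / (y powr ((\<rho> + 1) / 2) * sqrt (Lf y))
          = L1 y powr (1/2) * y powr -c * Lf y powr -(1/2)"
        by (simp add: c_def powr_half_sqrt)
    qed
  qed simp
qed

theorem lemma3p1:
  fixes \<rho> \<theta> A :: real
    and L L1 L2 Lf K :: "real \<Rightarrow> real"
  assumes rho: "\<rho> > 0" and theta: "\<theta> \<ge> 0"
    and L1: "\<forall>x\<ge>A. (L has_real_derivative L1 x) (at x within {A..})"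
    and L2: "\<forall>x\<ge>A. (L1 has_real_derivative L2 x) (at x within {A..})"
    and L2c: "continuous_on {A..} L2"
    and Linf: "filterlim L at_top at_top"
    and L1NRV: "NRV (-1) L1"
    and Lf: "\<exists>B. nsv Lf B"
    and K: "NRV0 \<theta> K"
    and Kmono: "\<theta> = 0 \<longrightarrow> (\<exists>\<delta>>0. mono_on {0<..<\<delta>} K)"
  shows "\<exists>\<beta>>0. \<exists>\<Phi> \<Phi>1 \<Phi>2 D.
     (\<forall>t\<in>{0<..<\<beta>}.
        K integrable_on {0..t} \<and>
        D \<le> \<Phi> t \<and>
        (\<lambda>y. sqrt (L1 y) / (y powr ((\<rho> + 1) / 2) * sqrt (Lf y))) integrable_on {\<Phi> t..} \<and>
        integral {\<Phi> t..} (\<lambda>y. sqrt (L1 y) / (y powr ((\<rho> + 1) / 2) * sqrt (Lf y)))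
          = integral {0..t} K \<and>
        (\<forall>x\<ge>D. (\<lambda>y. sqrt (L1 y) / (y powr ((\<rho> + 1) / 2) * sqrt (Lf y))) integrable_on {x..} \<and>
           integral {x..} (\<lambda>y. sqrt (L1 y) / (y powr ((\<rho> + 1) / 2) * sqrt (Lf y)))
             = integral {0..t} K \<longrightarrow> x = \<Phi> t)) \<and>
     (\<forall>t\<in>{0<..<\<beta>}. (\<Phi> has_real_derivative \<Phi>1 t) (at t)) \<and>
     (\<forall>t\<in>{0<..<\<beta>}. (\<Phi>1 has_real_derivative \<Phi>2 t) (at t)) \<and>
     continuous_on {0<..<\<beta>} \<Phi>2 \<and>
     filterlim \<Phi> at_top (at_right 0) \<and>
     NRV0 (-2 * (\<theta> + 1) / \<rho>) \<Phi> \<and>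
     (\<forall>m::nat\<ge>1. ((\<lambda>t. logm m (\<Phi> t) / logm m (1 / t)) \<longlongrightarrow>
         (if m = 1 then 2 * (1 + \<theta>) / \<rho> else 1)) (at_right 0)) \<and>
     ((\<lambda>t. \<Phi> t * \<Phi>2 t / (\<Phi>1 t)\<^sup>2) \<longlongrightarrow> 1 + \<rho> / (2 * (\<theta> + 1))) (at_right 0) \<and>
     ((\<lambda>t. L (\<Phi> t) / L1 (\<Phi> t) * (\<Phi> t / (\<Phi>1 t)\<^sup>2)) \<longlongrightarrow> 0) (at_right 0)"
proof -
  define g where "g y = sqrt (L1 y) / (y powr ((\<rho> + 1) / 2) * sqrt (Lf y))" for y
  define \<alpha> where "\<alpha> = 2 * (1 + \<theta>) / \<rho>"
  have "\<alpha> > 0" "\<rho>/2 > 0" "\<theta> > -1" using rho theta by (simp_all add: \<alpha>_def)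
  obtain Bf where "nsv Lf Bf" using Lf by blast
  obtain g' Bg where g: "smooth_RV (-1-\<rho>/2) g g' Bg"
    using integrand_smooth_RV[OF L1NRV \<open>nsv Lf Bf\<close>] unfolding g_def[abs_def] by blast
  obtain K' t0 where "smooth_RV0 \<theta> K K' t0" using NRV0_imp_smooth_RV0[OF K] .
  then obtain t1 M where K: "smooth_RV0 \<theta> K K' t1" and bdd: "\<forall>t\<in>{0<..t1}. K t \<le> M"
    using smooth_RV0_bounded[OF _ theta Kmono] by blast
  have idx: "(\<theta>+1)/(\<rho>/2) = \<alpha>" "1 + (\<rho>/2)/(\<theta>+1) = 1 + \<rho> / (2 * (\<theta> + 1))"
    "-2 * (\<theta> + 1) / \<rho> = -\<alpha>"
    using rho theta by (simp_all add: \<alpha>_def field_simps)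
  obtain \<beta> \<Phi> \<Phi>1 \<Phi>2 D where "\<beta> > 0"
    and "\<forall>t\<in>{0<..<\<beta>}. K integrable_on {0..t} \<and> D \<le> \<Phi> t \<and> g integrable_on {\<Phi> t..} \<and>
           integral {\<Phi> t..} g = integral {0..t} K \<and>
           (\<forall>x\<ge>D. g integrable_on {x..} \<and> integral {x..} g = integral {0..t} K \<longrightarrow> x = \<Phi> t)"
    and "\<forall>t\<in>{0<..<\<beta>}. (\<Phi> has_real_derivative \<Phi>1 t) (at t)"
    and "\<forall>t\<in>{0<..<\<beta>}. (\<Phi>1 has_real_derivative \<Phi>2 t) (at t)"
    and "continuous_on {0<..<\<beta>} \<Phi>2"
    and \<Phi>_lim: "filterlim \<Phi> at_top (at_right 0)"
    and \<Phi>: "smooth_RV0 (-\<alpha>) \<Phi> \<Phi>1 (\<beta>/2)"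
    and "((\<lambda>t. \<Phi> t * \<Phi>2 t / (\<Phi>1 t)\<^sup>2) \<longlongrightarrow> 1 + \<rho> / (2 * (\<theta> + 1))) (at_right 0)"
    by (rule tail_head_inverse[OF \<open>\<rho>/2 > 0\<close> \<open>\<theta> > -1\<close> g K bdd, unfolded idx(1,2)])
  moreover note smooth_RV0_imp_NRV0[OF \<Phi>, folded idx(3)]
  moreover note smooth_RV0_iterated_logs[OF \<Phi> \<open>\<alpha> > 0\<close>, unfolded \<alpha>_def]
  moreover note inverse_antiderivative_ratio_limit[OF L1NRV L1 \<Phi> \<open>\<alpha> > 0\<close> \<Phi>_lim]
  ultimately show ?thesis
    unfolding g_def[abs_def, symmetric]
    by (intro exI[of _ \<beta>] exI[of _ \<Phi>] exI[of _ \<Phi>1] exI[of _ \<Phi>2] exI[of _ D] conjI)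
qed

end
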